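(* Let $G$ be a connected graph on $n$ vertices with $\lambda_{2}(D(G))\leq\frac{17-\sqrt{329}}{2}$. Then either $G\cong K_{n}$, or $G\cong K_{s}^{t}$ for some integers $2\leq t\leq s$ with $s+t=n$, or $G\cong K^{n_{1},n_{2},\ldots,n_{k}}_{n}$ for some $k\geq 2$ and positive integers $n_1,\dots,n_k$ with $\sum_{i=1}^{k}n_{i}+1=n$.
   Context: $D(G)$ is the distance matrix of $G$ (entries are graph distances), with eigenvalues $\lambda_{1}(D(G))\geq\lambda_{2}(D(G))\geq\cdots$. $K_{s}^{t}$ ($2\le t\le s$) denotes the graph on $n=s+t$ vertices obtained from the complete graph $K_s$ by attaching a pendant edge (a new vertex of degree 1) to each of $t$ distinct vertices of $K_s$. $K^{n_{1},n_{2},\ldots,n_{k}}_{n}$ ($k\ge 2$, $n=\sum n_i+1$) denotes the graph having a vertex $v$ of degree $n-1$ such that $G-v$ is the disjoint union of complete graphs $K_{n_1},\dots,K_{n_k}$. *)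

theory Defs
  imports Complex_Main "Jordan_Normal_Form.Char_Poly"
begin

definition simple_graph :: "nat \<Rightarrow> (nat \<Rightarrow> nat \<Rightarrow> bool) \<Rightarrow> bool" where
  "simple_graph n E \<longleftrightarrow> (\<forall>x y. E x y \<longrightarrow> x < n \<and> y < n \<and> x \<noteq> y \<and> E y x)"

definition graph_connected :: "nat \<Rightarrow> (nat \<Rightarrow> nat \<Rightarrow> bool) \<Rightarrow> bool" where
  "graph_connected n E \<longleftrightarrow> (\<forall>x<n. \<forall>y<n. E\<^sup>*\<^sup>* x y)"

definition gdist :: "(nat \<Rightarrow> nat \<Rightarrow> bool) \<Rightarrow> nat \<Rightarrow> nat \<Rightarrow> nat" where
  "gdist E x y = (LEAST k. (E ^^ k) x y)"

definition distance_matrix :: "nat \<Rightarrow> (nat \<Rightarrow> nat \<Rightarrow> bool) \<Rightarrow> real mat" where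
  "distance_matrix n E = mat n n (\<lambda>(i, j). real (gdist E i j))"

definition eigenvalues_desc :: "real mat \<Rightarrow> real list" where
  "eigenvalues_desc A = rev (sorted_list_of_multiset (proots (char_poly A)))"

definition lambda2 :: "real mat \<Rightarrow> real" where
  "lambda2 A = eigenvalues_desc A ! 1"

definition graph_iso ::
  "nat \<Rightarrow> (nat \<Rightarrow> nat \<Rightarrow> bool) \<Rightarrow> nat \<Rightarrow> (nat \<Rightarrow> nat \<Rightarrow> bool) \<Rightarrow> bool" where
  "graph_iso n E m F \<longleftrightarrow>
     (\<exists>f. bij_betw f {0..<n} {0..<m} \<and> (\<forall>x<n. \<forall>y<n. E x y \<longleftrightarrow> F (f x) (f y)))"

definition complete_graph :: "nat \<Rightarrow> nat \<Rightarrow> nat \<Rightarrow> bool" where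
  "complete_graph n x y \<longleftrightarrow> x < n \<and> y < n \<and> x \<noteq> y"

(* K_s^t on {0..<s+t}: clique on {0..<s}, pendant vertex s+i attached to i for i<t *)
definition pendant_edge :: "nat \<Rightarrow> nat \<Rightarrow> nat \<Rightarrow> nat \<Rightarrow> bool" where
  "pendant_edge s t x y \<longleftrightarrow> s \<le> x \<and> x < s + t \<and> y = x - s"

definition Kst :: "nat \<Rightarrow> nat \<Rightarrow> nat \<Rightarrow> nat \<Rightarrow> bool" where
  "Kst s t x y \<longleftrightarrow> (x < s \<and> y < s \<and> x \<noteq> y) \<or> pendant_edge s t x y \<or> pendant_edge s t y x"

(* K_n^{n_1,...,n_k} on {0..<sum ns + 1}: vertex 0 is the dominating vertex,
   the vertices 1..sum ns are split into consecutive blocks of sizes n_1,...,n_k,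
   each block a clique *)
definition block_of :: "nat list \<Rightarrow> nat \<Rightarrow> nat" where
  "block_of ns j = (LEAST i. j \<le> sum_list (take (Suc i) ns))"

definition Kcliques :: "nat list \<Rightarrow> nat \<Rightarrow> nat \<Rightarrow> bool" where
  "Kcliques ns x y \<longleftrightarrow> x < sum_list ns + 1 \<and> y < sum_list ns + 1 \<and> x \<noteq> y \<and>
     (x = 0 \<or> y = 0 \<or> block_of ns x = block_of ns y)"

end

theory Submission
  imports Defs
begin

text \<open>
  Since \<open>A - c I\<close> has at most one positive eigenvalue when \<open>\<lambda>\<^sub>2(A) \<le> c\<close>, its quadratic form
  cannot be positive definite on any two-dimensional subspace. Applied to the distance matrix with
  \<open>c = (17 - \<surd>329) / 2\<close> and to test vectors supported on a few vertices, this excludes a short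
  list of distance patterns: induced \<open>C\<^sub>4\<close> and diamonds, induced \<open>P\<^sub>4\<close> whose ends are at distance
  \<open>2\<close>, isometric forks and \<open>(3,2)\<close>-tadpoles, and induced \<open>P\<^sub>5\<close>. If some
  vertex dominates the graph, the remaining vertices induce no \<open>P\<^sub>3\<close>, hence a disjoint union of
  cliques, which gives \<open>K\<^sub>n\<close> or \<open>K\<^sub>n\<^bsup>n\<^sub>1, \<dots>, n\<^sub>k\<^esub>\<close>. Otherwise the vertices of degree at least two
  form a clique, each of them carries at most one pendant vertex, and there are at least two pendant
  vertices, which gives \<open>K\<^sub>s\<^sup>t\<close>.
\<close>

section \<open>Spectral facts on real symmetric matrices\<close>

lemma real_sym_mat_complex_eigenvalue_real:
  fixes A :: "real mat"
  assumes A: "A \<in> carrier_mat n n" and sym: "transpose_mat A = A"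
    and v: "v \<in> carrier_vec n" "v \<noteq> 0\<^sub>v n" "map_mat complex_of_real A *\<^sub>v v = a \<cdot>\<^sub>v v"
  shows "a = complex_of_real (Re a)"
proof -
  have ev: "(\<Sum>j<n. complex_of_real (A $$ (i,j)) * v $ j) = a * v $ i" if i: "i < n" for i
  proof -
    have "(map_mat complex_of_real A *\<^sub>v v) $ i = (a \<cdot>\<^sub>v v) $ i" using v(3) by simp
    thus ?thesis using i A v(1) by (simp add: scalar_prod_def lessThan_atLeast0 mult.commute)
  qed
  \<comment> \<open>\<open>S = v\<^sup>* A v = a \<parallel>v\<parallel>\<^sup>2\<close> is real because \<open>A\<close> is real symmetric\<close>
  define S where "S = (\<Sum>i<n. \<Sum>j<n. complex_of_real (A $$ (i,j)) * v $ j * cnj (v $ i))"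
  define N where "N = (\<Sum>i<n. (Re (v $ i))\<^sup>2 + (Im (v $ i))\<^sup>2)"
  have S_eq: "S = a * complex_of_real N"
  proof -
    have "S = (\<Sum>i<n. (\<Sum>j<n. complex_of_real (A $$ (i,j)) * v $ j) * cnj (v $ i))"
      unfolding S_def by (simp add: sum_distrib_right)
    also have "\<dots> = a * (\<Sum>i<n. v $ i * cnj (v $ i))"
      using ev by (simp add: sum_distrib_left mult.assoc)
    finally show ?thesis unfolding N_def by (simp add: complex_mult_cnj)
  qed
  have A_sym: "A $$ (i,j) = A $$ (j,i)" if "i < n" "j < n" for i j
    using that A sym by (metis carrier_matD(1,2) index_transpose_mat(1))
  have "cnj S = (\<Sum>i<n. \<Sum>j<n. complex_of_real (A $$ (i,j)) * cnj (v $ j) * v $ i)"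
    unfolding S_def by (simp add: cnj_sum)
  also have "\<dots> = (\<Sum>j<n. \<Sum>i<n. complex_of_real (A $$ (i,j)) * cnj (v $ j) * v $ i)"
    by (rule sum.swap)
  also have "\<dots> = S" unfolding S_def
    by (intro sum.cong refl) (simp add: A_sym mult.commute mult.left_commute)
  finally have S_real: "cnj S = S" .
  obtain i0 where i0: "i0 < n" "v $ i0 \<noteq> 0" using v(1,2) by (metis carrier_vecD eq_vecI index_zero_vec(1,2))
  have "N > 0" unfolding N_def
    by (rule sum_pos2[of _ i0]) (use i0 in \<open>auto simp: complex_eq_iff sum_power2_gt_zero_iff\<close>)
  moreover have "cnj a * complex_of_real N = a * complex_of_real N"
    using S_eq S_real by (metis complex_cnj_complex_of_real complex_cnj_mult)
  ultimately have "cnj a = a" by simp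
  thus ?thesis by (simp add: complex_eq_iff)
qed

lemma real_sym_mat_has_eigenvector:
  fixes A :: "real mat"
  assumes A: "A \<in> carrier_mat n n" and n: "0 < n" and sym: "transpose_mat A = A"
  obtains e x where "x \<in> carrier_vec n" "x \<noteq> 0\<^sub>v n" "A *\<^sub>v x = e \<cdot>\<^sub>v x"
proof -
  define Ac where "Ac = map_mat complex_of_real A"
  have Ac: "Ac \<in> carrier_mat n n" using A by (simp add: Ac_def)
  obtain as where cp: "char_poly Ac = (\<Prod>a\<leftarrow>as. [:- a, 1:])" and len: "length as = n"
    using char_poly_factorized[OF Ac] by blast
  obtain a where a: "a \<in> set as" using len n by (cases as) auto
  have "poly (char_poly Ac) a = 0" unfolding cp by (rule linear_poly_root[OF a])
  hence "eigenvalue Ac a" using eigenvalue_root_char_poly[OF Ac] by simp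
  then obtain v where v: "v \<in> carrier_vec n" "v \<noteq> 0\<^sub>v n" "Ac *\<^sub>v v = a \<cdot>\<^sub>v v"
    unfolding eigenvalue_def eigenvector_def using Ac by auto
  define r where "r = Re a"
  have a_real: "a = complex_of_real r"
    unfolding r_def by (rule real_sym_mat_complex_eigenvalue_real[OF A sym v[unfolded Ac_def]])
  \<comment> \<open>real and imaginary parts of a complex eigenvector for a real eigenvalue are real eigenvectors\<close>
  have parts: "A *\<^sub>v vec n (\<lambda>i. f (v $ i)) = r \<cdot>\<^sub>v vec n (\<lambda>i. f (v $ i))"
    if f: "f = Re \<or> f = Im" for f
  proof (rule eq_vecI)
    fix i assume "i < dim_vec (r \<cdot>\<^sub>v vec n (\<lambda>i. f (v $ i)))"
    hence i: "i < n" by simp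
    have "(Ac *\<^sub>v v) $ i = (a \<cdot>\<^sub>v v) $ i" using v(3) by simp
    hence "(\<Sum>j<n. complex_of_real (A $$ (i,j)) * v $ j) = complex_of_real r * v $ i"
      using i A v(1) a_real by (simp add: Ac_def scalar_prod_def lessThan_atLeast0 mult.commute)
    from arg_cong[OF this, of f] f
    show "(A *\<^sub>v vec n (\<lambda>i. f (v $ i))) $ i = (r \<cdot>\<^sub>v vec n (\<lambda>i. f (v $ i))) $ i"
      using i carrier_matD[OF A] by (auto simp: Re_sum Im_sum scalar_prod_def lessThan_atLeast0)
  qed (use A in simp)
  obtain i0 where i0: "i0 < n" "v $ i0 \<noteq> 0" using v(1,2) by (metis carrier_vecD eq_vecI index_zero_vec(1,2))
  have nonzero: "vec n (\<lambda>i. f (v $ i)) \<noteq> 0\<^sub>v n" if "f (v $ i0) \<noteq> 0" for f :: "complex \<Rightarrow> real"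
    using that i0(1) by (metis index_vec index_zero_vec(1))
  show ?thesis
  proof (cases "Re (v $ i0) = 0")
    case True
    hence "Im (v $ i0) \<noteq> 0" using i0(2) by (simp add: complex_eq_iff)
    from that[OF vec_carrier nonzero[of Im, OF this] parts] show ?thesis by simp
  next
    case False
    from that[OF vec_carrier nonzero[of Re, OF False] parts] show ?thesis by simp
  qed
qed

definition householder_mat :: "nat \<Rightarrow> real vec \<Rightarrow> real mat" where
  "householder_mat n w = mat n n (\<lambda>(i,j). (if i = j then 1 else 0) - (2 / (w \<bullet> w)) * w $ i * w $ j)"

lemma householder_mat_carrier [simp]: "householder_mat n w \<in> carrier_mat n n"
  by (simp add: householder_mat_def)

lemma transpose_householder_mat: "transpose_mat (householder_mat n w) = householder_mat n w"
  by (rule eq_matI) (auto simp: householder_mat_def)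

lemma householder_mat_involution:
  assumes w: "w \<in> carrier_vec n"
  shows "householder_mat n w * householder_mat n w = 1\<^sub>m n"
proof (rule eq_matI)
  define c where "c = 2 / (w \<bullet> w)"
  have ww: "w \<bullet> w = (\<Sum>k<n. w $ k * w $ k)" using w by (simp add: scalar_prod_def lessThan_atLeast0)
  have cc: "c * c * (w \<bullet> w) = 2 * c" unfolding c_def by (cases "w \<bullet> w = 0") (auto simp: field_simps)
  fix i j assume "i < dim_row (1\<^sub>m n)" "j < dim_col (1\<^sub>m n)"
  hence i: "i < n" and j: "j < n" by auto
  have "(householder_mat n w * householder_mat n w) $$ (i,j)
      = (\<Sum>k<n. ((if i = k then 1 else 0) - c * w $ i * w $ k) * ((if k = j then 1 else 0) - c * w $ k * w $ j))"
    using i j by (simp add: householder_mat_def c_def scalar_prod_def lessThan_atLeast0 row_def col_def)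
  also have "\<dots> = (\<Sum>k<n. (if i = k then 1 else 0) * (if k = j then 1 else 0))
     - (\<Sum>k<n. (if i = k then 1 else 0) * (c * w $ k * w $ j))
     - (\<Sum>k<n. (c * w $ i * w $ k) * (if k = j then 1 else 0))
     + c * c * w $ i * w $ j * (\<Sum>k<n. w $ k * w $ k)"
    by (simp add: algebra_simps sum.distrib sum_subtractf sum_distrib_left)
  also have "\<dots> = (if i = j then 1 else 0) - c * w $ i * w $ j - c * w $ i * w $ j
      + c * c * w $ i * w $ j * (w \<bullet> w)"
    using i j by (simp add: ww if_distrib[of "\<lambda>x. x * _"] if_distrib[of "\<lambda>x. _ * x"] cong: if_cong)
  also have "\<dots> = (if i = j then 1 else 0) + (c * c * (w \<bullet> w) - 2 * c) * w $ i * w $ j"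
    by (simp add: algebra_simps)
  also have "\<dots> = 1\<^sub>m n $$ (i,j)" using cc i j by simp
  finally show "(householder_mat n w * householder_mat n w) $$ (i,j) = 1\<^sub>m n $$ (i,j)" .
qed (auto simp: householder_mat_def)

lemma scalar_prod_self_eq_0:
  fixes v :: "real vec"
  assumes "v \<in> carrier_vec n" "v \<bullet> v = 0" "i < n"
  shows "v $ i = 0"
proof -
  have "(\<Sum>k\<in>{0..<n}. v $ k * v $ k) = 0" using assms(1,2) unfolding scalar_prod_def by simp
  hence "\<forall>k\<in>{0..<n}. v $ k * v $ k = 0" by (simp add: sum_nonneg_eq_0_iff)
  thus ?thesis using assms(3) by simp
qed

lemma householder_mat_unit_vec:
  assumes y: "y \<in> carrier_vec n" and yy: "y \<bullet> y = 1" and n: "0 < n"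
  shows "householder_mat n (y - unit_vec n 0) *\<^sub>v unit_vec n 0 = y"
proof (rule eq_vecI)
  define w where "w = y - unit_vec n 0"
  have w: "w \<in> carrier_vec n" using y by (simp add: w_def)
  have wi: "w $ i = y $ i - (if i = 0 then 1 else 0)" if "i < n" for i
    using that y by (simp add: w_def unit_vec_def)
  have "w \<bullet> w = (\<Sum>k<n. (y $ k - (if k = 0 then 1 else 0)) * (y $ k - (if k = 0 then 1 else 0)))"
    using w wi by (simp add: scalar_prod_def lessThan_atLeast0)
  also have "\<dots> = (\<Sum>k<n. y $ k * y $ k - 2 * (if k = 0 then y $ k else 0) + (if k = 0 then 1 else 0))"
    by (intro sum.cong) (auto simp: algebra_simps)
  also have "\<dots> = y \<bullet> y - 2 * y $ 0 + 1"
    using n y by (simp add: sum.distrib sum_subtractf scalar_prod_def lessThan_atLeast0 flip: sum_distrib_left)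
  finally have ww: "w \<bullet> w = 2 - 2 * y $ 0" using yy by simp
  fix i assume "i < dim_vec y"
  hence i: "i < n" using y by simp
  have "(householder_mat n w *\<^sub>v unit_vec n 0) $ i = (if i = 0 then 1 else 0) - (2 / (w \<bullet> w)) * w $ i * w $ 0"
    using i n by (simp add: householder_mat_def scalar_prod_def lessThan_atLeast0 row_def unit_vec_def
        if_distrib[of "\<lambda>x. _ * x"] cong: if_cong)
  also have "\<dots> = y $ i"
  proof (cases "y $ 0 = 1")
    case True
    hence "w \<bullet> w = 0" using ww by simp
    thus ?thesis using wi[OF i] scalar_prod_self_eq_0[OF w _ i] by simp
  next
    case False
    have c0: "(2 / (w \<bullet> w)) * w $ 0 = -1" using False wi[OF n] unfolding ww by (simp add: field_simps)
    have "(2 / (w \<bullet> w)) * w $ i * w $ 0 = w $ i * ((2 / (w \<bullet> w)) * w $ 0)" by (simp only: mult_ac)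
    also have "\<dots> = - w $ i" using c0 by simp
    finally show ?thesis using wi[OF i] by simp
  qed
  finally show "(householder_mat n (y - unit_vec n 0) *\<^sub>v unit_vec n 0) $ i = y $ i" unfolding w_def .
qed (use y in \<open>simp add: householder_mat_def\<close>)

lemma real_sym_mat_has_unit_eigenvector:
  fixes A :: "real mat"
  assumes A: "A \<in> carrier_mat n n" and n: "0 < n" and sym: "transpose_mat A = A"
  obtains e y where "y \<in> carrier_vec n" "y \<bullet> y = 1" "A *\<^sub>v y = e \<cdot>\<^sub>v y"
proof -
  obtain e x where x: "x \<in> carrier_vec n" "x \<noteq> 0\<^sub>v n" and ex: "A *\<^sub>v x = e \<cdot>\<^sub>v x"
    using real_sym_mat_has_eigenvector[OF A n sym] .
  obtain i0 where i0: "i0 < n" "x $ i0 \<noteq> 0" using x by (metis carrier_vecD eq_vecI index_zero_vec(1,2))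
  have "x \<bullet> x = (\<Sum>k\<in>{0..<n}. x $ k * x $ k)" using x by (simp add: scalar_prod_def)
  also have "\<dots> > 0"
    by (rule sum_pos2[of _ i0]) (use i0 in \<open>auto simp: zero_less_mult_iff linorder_neq_iff\<close>)
  finally have xx: "x \<bullet> x > 0" .
  define y where "y = (1 / sqrt (x \<bullet> x)) \<cdot>\<^sub>v x"
  have "y \<in> carrier_vec n" using x by (simp add: y_def)
  moreover have "y \<bullet> y = 1"
    unfolding y_def using x xx by (simp add: smult_scalar_prod_distrib scalar_prod_smult_distrib)
  moreover have "A *\<^sub>v y = e \<cdot>\<^sub>v y"
    unfolding y_def using mult_mat_vec[OF A x(1)] ex by (simp add: smult_smult_assoc mult.commute)
  ultimately show ?thesis using that by blast
qed

lemma sym_mat_unit_vec_eigenvector_block: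
  fixes A :: "real mat"
  assumes A: "A \<in> carrier_mat (Suc m) (Suc m)" and sym: "transpose_mat A = A"
    and e0: "A *\<^sub>v unit_vec (Suc m) 0 = e \<cdot>\<^sub>v unit_vec (Suc m) 0"
  obtains B where "B \<in> carrier_mat m m" "transpose_mat B = B"
    "A = four_block_mat (mat 1 1 (\<lambda>_. e)) (0\<^sub>m 1 m) (0\<^sub>m m 1) B"
proof -
  have col0: "A $$ (i,0) = (if i = 0 then e else 0)" if "i < Suc m" for i
    using arg_cong[OF e0, of "\<lambda>v. v $ i"] that A by (auto simp: index_unit_vec)
  have row0: "A $$ (0,j) = (if j = 0 then e else 0)" if "j < Suc m" for j
  proof -
    have "A $$ (0,j) = transpose_mat A $$ (0,j)" using sym by simp
    also have "\<dots> = A $$ (j,0)" using that A by simp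
    finally show ?thesis using col0[OF that] by simp
  qed
  define B where "B = mat m m (\<lambda>(i,j). A $$ (Suc i, Suc j))"
  have B: "B \<in> carrier_mat m m" unfolding B_def by simp
  have "transpose_mat B = B"
    unfolding B_def using sym A by (intro eq_matI) (auto, metis carrier_matD(1,2) index_transpose_mat(1) Suc_less_eq)
  moreover have "A = four_block_mat (mat 1 1 (\<lambda>_. e)) (0\<^sub>m 1 m) (0\<^sub>m m 1) B"
  proof (rule eq_matI)
    fix i j assume "i < dim_row (four_block_mat (mat 1 1 (\<lambda>_. e)) (0\<^sub>m 1 m) (0\<^sub>m m 1) B)"
      "j < dim_col (four_block_mat (mat 1 1 (\<lambda>_. e)) (0\<^sub>m 1 m) (0\<^sub>m m 1) B)"
    hence i: "i < Suc m" and j: "j < Suc m" using B by auto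
    show "A $$ (i,j) = four_block_mat (mat 1 1 (\<lambda>_. e)) (0\<^sub>m 1 m) (0\<^sub>m m 1) B $$ (i,j)"
    proof (cases i; cases j)
      fix i' j' assume "i = Suc i'" "j = Suc j'"
      thus ?thesis using i j B by (simp add: B_def)
    qed (use row0 col0 i j B in auto)
  qed (use A B in auto)
  ultimately show ?thesis using B that by blast
qed

text \<open>A Householder reflection moving a unit eigenvector to \<open>e\<^sub>0\<close> splits off a \<open>1 \<times> 1\<close> block.\<close>

lemma real_sym_mat_deflation:
  fixes A :: "real mat"
  assumes A: "A \<in> carrier_mat (Suc m) (Suc m)" and sym: "transpose_mat A = A"
  obtains H e B where "H \<in> carrier_mat (Suc m) (Suc m)" "transpose_mat H = H" "H * H = 1\<^sub>m (Suc m)"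
    "B \<in> carrier_mat m m" "transpose_mat B = B"
    "H * A * H = four_block_mat (mat 1 1 (\<lambda>_. e)) (0\<^sub>m 1 m) (0\<^sub>m m 1) B"
proof -
  define n where "n = Suc m"
  have A: "A \<in> carrier_mat n n" and n: "0 < n" using A by (simp_all add: n_def)
  obtain e y where y: "y \<in> carrier_vec n" "y \<bullet> y = 1" and ey: "A *\<^sub>v y = e \<cdot>\<^sub>v y"
    using real_sym_mat_has_unit_eigenvector[OF A n sym] .
  define H where "H = householder_mat n (y - unit_vec n 0)"
  have H: "H \<in> carrier_mat n n" and HT: "transpose_mat H = H"
    unfolding H_def by (simp_all add: transpose_householder_mat)
  have HH: "H * H = 1\<^sub>m n" unfolding H_def using y by (intro householder_mat_involution) simp
  have He0: "H *\<^sub>v unit_vec n 0 = y" unfolding H_def by (rule householder_mat_unit_vec[OF y n])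
  have Hy: "H *\<^sub>v y = unit_vec n 0"
    using assoc_mult_mat_vec[OF H H, of "unit_vec n 0"] HH He0 by simp
  have "transpose_mat (H * A * H) = transpose_mat H * transpose_mat (H * A)"
    using H A by (intro transpose_mult[of _ n n]) auto
  also have "\<dots> = H * A * H" using H A HT sym by (simp add: transpose_mult[of _ n n])
  finally have HAH_sym: "transpose_mat (H * A * H) = H * A * H" .
  have "H * A * H *\<^sub>v unit_vec n 0 = H *\<^sub>v (A *\<^sub>v (H *\<^sub>v unit_vec n 0))"
    using H A by (simp add: assoc_mult_mat_vec[of _ n n _ n])
  also have "\<dots> = e \<cdot>\<^sub>v unit_vec n 0" unfolding He0 ey using mult_mat_vec[OF H y(1)] Hy by simp
  finally have "H * A * H *\<^sub>v unit_vec n 0 = e \<cdot>\<^sub>v unit_vec n 0" .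
  moreover have "H * A * H \<in> carrier_mat (Suc m) (Suc m)" using H A n_def by simp
  ultimately obtain B where "B \<in> carrier_mat m m" "transpose_mat B = B"
    "H * A * H = four_block_mat (mat 1 1 (\<lambda>_. e)) (0\<^sub>m 1 m) (0\<^sub>m m 1) B"
    using sym_mat_unit_vec_eigenvector_block HAH_sym unfolding n_def by blast
  with H HT HH that show ?thesis unfolding n_def by blast
qed

theorem real_sym_mat_orthogonal_diagonalization:
  fixes A :: "real mat"
  assumes "A \<in> carrier_mat n n" "transpose_mat A = A"
  shows "\<exists>P \<in> carrier_mat n n. transpose_mat P * P = 1\<^sub>m n \<and> diagonal_mat (transpose_mat P * A * P)"
  using assms
proof (induct n arbitrary: A)
  case 0
  show ?case by (rule bexI[of _ "1\<^sub>m 0"]) (use 0 in \<open>auto simp: diagonal_mat_def\<close>)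
next
  case (Suc m)
  obtain H e B where H: "H \<in> carrier_mat (Suc m) (Suc m)" and HT: "transpose_mat H = H"
    and HH: "H * H = 1\<^sub>m (Suc m)" and B: "B \<in> carrier_mat m m" "transpose_mat B = B"
    and HAH: "H * A * H = four_block_mat (mat 1 1 (\<lambda>_. e)) (0\<^sub>m 1 m) (0\<^sub>m m 1) B"
    using real_sym_mat_deflation[OF Suc(2,3)] .
  obtain P' where P': "P' \<in> carrier_mat m m" and P'P': "transpose_mat P' * P' = 1\<^sub>m m"
    and P'd: "diagonal_mat (transpose_mat P' * B * P')"
    using Suc(1)[OF B] by auto
  define Q where "Q = four_block_mat (1\<^sub>m 1) (0\<^sub>m 1 m) (0\<^sub>m m 1) P'"
  have Q: "Q \<in> carrier_mat (Suc m) (Suc m)" unfolding Q_def using P' by auto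
  have QT: "transpose_mat Q = four_block_mat (1\<^sub>m 1) (0\<^sub>m 1 m) (0\<^sub>m m 1) (transpose_mat P')"
    unfolding Q_def using P' by (subst transpose_four_block_mat[of _ 1 1 _ m _ m]) auto
  have "transpose_mat Q * Q = four_block_mat (1\<^sub>m 1) (0\<^sub>m 1 m) (0\<^sub>m m 1) (transpose_mat P' * P')"
    unfolding QT unfolding Q_def using P' by (subst mult_four_block_mat[of _ 1 1 _ m _ m _ _ 1 _ m]) auto
  also have "\<dots> = 1\<^sub>m (Suc m)" unfolding P'P' by (rule eq_matI) auto
  finally have QQ: "transpose_mat Q * Q = 1\<^sub>m (Suc m)" .
  have "transpose_mat Q * (H * A * H) * Q
      = four_block_mat (mat 1 1 (\<lambda>_. e)) (0\<^sub>m 1 m) (0\<^sub>m m 1) (transpose_mat P' * B * P')"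
    unfolding QT HAH unfolding Q_def using P' B
    by (subst mult_four_block_mat[of _ 1 1 _ m _ m _ _ 1 _ m], auto,
        subst mult_four_block_mat[of _ 1 1 _ m _ m _ _ 1 _ m], auto)
  moreover have "diagonal_mat (four_block_mat (mat 1 1 (\<lambda>_. e)) (0\<^sub>m 1 m) (0\<^sub>m m 1) (transpose_mat P' * B * P'))"
    using P'd P' B unfolding diagonal_mat_def by auto
  moreover have "transpose_mat (H * Q) = transpose_mat Q * H"
    using H Q HT by (simp add: transpose_mult[of _ "Suc m" "Suc m"])
  moreover have "transpose_mat Q * H * (H * Q) = 1\<^sub>m (Suc m)"
  proof -
    have "transpose_mat Q * H * (H * Q) = transpose_mat Q * (H * H) * Q"
      using H Q by (simp add: assoc_mult_mat[of _ "Suc m" "Suc m" _ "Suc m" _ "Suc m"])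
    thus ?thesis using HH QQ Q by simp
  qed
  moreover have "transpose_mat Q * H * A * (H * Q) = transpose_mat Q * (H * A * H) * Q"
    using H Q Suc(2) by (simp add: assoc_mult_mat[of _ "Suc m" "Suc m" _ "Suc m" _ "Suc m"])
  ultimately show ?case using H Q by (intro bexI[of _ "H * Q"]) auto
qed

lemma proots_prod_linear_factors: "proots (\<Prod>a\<leftarrow>ds. [:- a, 1:]) = mset (ds :: real list)"
proof (induct ds)
  case (Cons a ds)
  have "(\<Prod>a\<leftarrow>ds. [:- a, 1:]) \<noteq> 0" by (auto simp: prod_list_zero_iff)
  hence "proots ([:- a, 1:] * (\<Prod>a\<leftarrow>ds. [:- a, 1:])) = proots [:- a, 1:] + proots (\<Prod>a\<leftarrow>ds. [:- a, 1:])"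
    by (intro proots_mult) auto
  thus ?case using Cons by (simp only: proots_linear_factor minus_minus) simp
qed simp

lemma second_largest_le_imp_one_above:
  fixes ds :: "real list"
  assumes "rev (sorted_list_of_multiset (mset ds)) ! 1 \<le> c"
  obtains j where "\<And>i. i < length ds \<Longrightarrow> i \<noteq> j \<Longrightarrow> ds ! i \<le> c"
proof -
  define L where "L = rev (sorted_list_of_multiset (mset ds))"
  have "length (filter (\<lambda>x. x > c) L) \<le> 1"
  proof (cases L rule: remdups_adj.cases)
    case (3 a b L')
    have "sorted (rev L)" unfolding L_def by simp
    hence "\<forall>x\<in>set L'. x \<le> b" using 3 by (auto simp: sorted_append)
    hence "filter (\<lambda>x. x > c) L' = []" using assms 3 unfolding L_def[symmetric] by (auto simp: filter_empty_conv)
    thus ?thesis using assms 3 unfolding L_def[symmetric] by simp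
  qed auto
  moreover have "length (filter (\<lambda>x. x > c) L) = length (filter (\<lambda>x. x > c) ds)"
    unfolding L_def by (metis mset_sorted_list_of_multiset mset_rev mset_filter size_mset)
  ultimately have card: "card {i. i < length ds \<and> ds ! i > c} \<le> 1"
    by (simp add: length_filter_conv_card)
  show ?thesis
  proof (cases "\<exists>j<length ds. ds ! j > c")
    case True
    then obtain j where j: "j < length ds" "ds ! j > c" by auto
    have "ds ! i \<le> c" if "i < length ds" "i \<noteq> j" for i
    proof (rule ccontr)
      assume "\<not> ?thesis"
      hence "card {i, j} \<le> card {i. i < length ds \<and> ds ! i > c}"
        using that j by (intro card_mono) auto
      thus False using card \<open>i \<noteq> j\<close> by simp
    qed
    thus ?thesis using that by blast
  next
    case False
    thus ?thesis using that[of 0] by force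
  qed
qed

lemma reverse_cauchy_schwarz_one_positive:
  fixes d y z :: "nat \<Rightarrow> real"
  assumes nonpos: "\<And>i. i < n \<Longrightarrow> i \<noteq> j \<Longrightarrow> d i \<le> 0"
    and pos: "(\<Sum>i<n. d i * y i * y i) > 0"
  shows "(\<Sum>i<n. d i * y i * y i) * (\<Sum>i<n. d i * z i * z i) \<le> (\<Sum>i<n. d i * y i * z i)\<^sup>2"
proof (rule ccontr)
  define a where "a = (\<Sum>i<n. d i * y i * y i)"
  define b where "b = (\<Sum>i<n. d i * y i * z i)"
  define c where "c = (\<Sum>i<n. d i * z i * z i)"
  assume "\<not> ?thesis"
  hence det: "a * c > b\<^sup>2" unfolding a_def b_def c_def by simp
  have expand: "(\<Sum>i<n. d i * (s * y i + t * z i) * (s * y i + t * z i)) = s * s * a + 2 * s * t * b + t * t * c"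
    for s t unfolding a_def b_def c_def
    by (simp add: sum.distrib sum_distrib_left algebra_simps)
  have nonpos_off_j: "s * s * a + 2 * s * t * b + t * t * c \<le> 0" if "s * y j + t * z j = 0" for s t
    unfolding expand[symmetric]
  proof (rule sum_nonpos)
    fix i assume "i \<in> {..<n}"
    thus "d i * (s * y i + t * z i) * (s * y i + t * z i) \<le> 0"
      using that nonpos[of i] by (cases "i = j") (auto simp: mult_nonpos_nonneg mult.assoc)
  qed
  \<comment> \<open>choose a combination killing the only positive coordinate\<close>
  define s where "s = (if y j = 0 \<and> z j = 0 then 1 else z j)"
  define t where "t = (if y j = 0 \<and> z j = 0 then 0 else - y j)"
  have "s * s * a + 2 * s * t * b + t * t * c \<le> 0" by (rule nonpos_off_j) (simp add: s_def t_def)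
  hence "a * (s * s * a + 2 * s * t * b + t * t * c) \<le> 0" using pos by (simp add: a_def mult_nonneg_nonpos)
  moreover have "a * (s * s * a + 2 * s * t * b + t * t * c) = (a * s + b * t)\<^sup>2 + (a * c - b\<^sup>2) * t\<^sup>2"
    by (simp add: power2_eq_square algebra_simps)
  moreover have "(a * s + b * t)\<^sup>2 + (a * c - b\<^sup>2) * t\<^sup>2 > 0"
  proof (cases "t = 0")
    case True
    hence "s \<noteq> 0" unfolding s_def t_def by (auto split: if_splits)
    thus ?thesis using True pos by (simp add: a_def)
  next
    case False
    thus ?thesis using det by (simp add: add_nonneg_pos)
  qed
  ultimately show False by linarith
qed

definition shifted_form :: "real mat \<Rightarrow> real \<Rightarrow> real vec \<Rightarrow> real vec \<Rightarrow> real" where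
  "shifted_form A c x y = x \<bullet> (A *\<^sub>v y) - c * (x \<bullet> y)"

lemma shifted_form_diagonalized:
  fixes A P D :: "real mat"
  assumes A: "A \<in> carrier_mat n n" and P: "P \<in> carrier_mat n n"
    and PP: "P * transpose_mat P = 1\<^sub>m n"
    and D: "transpose_mat P * A * P = D" and diag: "diagonal_mat D"
    and x: "x \<in> carrier_vec n" and x': "x' \<in> carrier_vec n"
  shows "shifted_form A c x x' =
    (\<Sum>i<n. (D $$ (i,i) - c) * (transpose_mat P *\<^sub>v x) $ i * (transpose_mat P *\<^sub>v x') $ i)"
proof -
  have PT: "transpose_mat P \<in> carrier_mat n n" using P by simp
  have Dc: "D \<in> carrier_mat n n" using D A P by auto
  have "P * D * transpose_mat P = (P * transpose_mat P) * A * (P * transpose_mat P)"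
    unfolding D[symmetric] using A P PT by (simp add: assoc_mult_mat[of _ n n _ n _ n])
  hence A_eq: "A = P * D * transpose_mat P" using PP A by simp
  define y where "y = transpose_mat P *\<^sub>v x"
  define y' where "y' = transpose_mat P *\<^sub>v x'"
  have y: "y \<in> carrier_vec n" "y' \<in> carrier_vec n" using PT x x' by (auto simp: y_def y'_def)
  have Dy': "(D *\<^sub>v y') $ i = D $$ (i,i) * y' $ i" if i: "i < n" for i
  proof -
    have "(D *\<^sub>v y') $ i = (\<Sum>k<n. D $$ (i,k) * y' $ k)"
      using i Dc y by (simp add: scalar_prod_def lessThan_atLeast0 row_def)
    also have "\<dots> = (\<Sum>k<n. if k = i then D $$ (i,i) * y' $ i else 0)"
      using diag Dc i unfolding diagonal_mat_def by (intro sum.cong) auto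
    finally show ?thesis using i by simp
  qed
  have "x \<bullet> (A *\<^sub>v x') = x \<bullet> (P *\<^sub>v (D *\<^sub>v y'))"
    unfolding A_eq y'_def using P Dc PT x' by (simp add: assoc_mult_mat_vec[of _ n n _ n])
  also have "\<dots> = y \<bullet> (D *\<^sub>v y')"
    unfolding y_def using transpose_vec_mult_scalar[OF P, of "D *\<^sub>v y'" x] Dc y x by simp
  also have "\<dots> = (\<Sum>i<n. D $$ (i,i) * y $ i * y' $ i)"
    using y Dc Dy' by (simp add: scalar_prod_def lessThan_atLeast0 mult.assoc mult.left_commute)
  finally have form: "x \<bullet> (A *\<^sub>v x') = (\<Sum>i<n. D $$ (i,i) * y $ i * y' $ i)" .
  have "x \<bullet> x' = x \<bullet> (P *\<^sub>v y')"
    unfolding y'_def using P PT x' PP by (simp flip: assoc_mult_mat_vec[of _ n n _ n])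
  also have "\<dots> = (\<Sum>i<n. y $ i * y' $ i)"
    unfolding y_def using transpose_vec_mult_scalar[OF P y(2) x] y by (simp add: scalar_prod_def lessThan_atLeast0)
  finally have inner: "x \<bullet> x' = (\<Sum>i<n. y $ i * y' $ i)" .
  show ?thesis unfolding shifted_form_def form inner y_def[symmetric] y'_def[symmetric]
    by (simp add: sum_distrib_left sum_subtractf[symmetric] algebra_simps)
qed

text \<open>If \<open>\<lambda>\<^sub>2(A) \<le> c\<close>, the form of \<open>A - c I\<close> has at most one positive eigenvalue, so it cannot be
  positive definite on the span of two vectors.\<close>

theorem lambda2_gt_if_shifted_form_pos_def:
  fixes A :: "real mat"
  assumes A: "A \<in> carrier_mat n n" and sym: "transpose_mat A = A"
    and u: "u \<in> carrier_vec n" and v: "v \<in> carrier_vec n"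
    and pos: "shifted_form A c u u > 0"
    and det: "shifted_form A c u u * shifted_form A c v v > (shifted_form A c u v)\<^sup>2"
  shows "c < lambda2 A"
proof (rule ccontr)
  assume "\<not> c < lambda2 A"
  obtain P where P: "P \<in> carrier_mat n n" and PTP: "transpose_mat P * P = 1\<^sub>m n"
    and diag: "diagonal_mat (transpose_mat P * A * P)"
    using real_sym_mat_orthogonal_diagonalization[OF A sym] by auto
  define D where "D = transpose_mat P * A * P"
  have PT: "transpose_mat P \<in> carrier_mat n n" using P by simp
  have PPT: "P * transpose_mat P = 1\<^sub>m n" using mat_mult_left_right_inverse[OF PT P PTP] .
  have Dc: "D \<in> carrier_mat n n" unfolding D_def using P A by simp
  have "P * D * transpose_mat P = (P * transpose_mat P) * A * (P * transpose_mat P)"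
    unfolding D_def using A P PT by (simp add: assoc_mult_mat[of _ n n _ n _ n])
  hence "similar_mat_wit A D P (transpose_mat P)"
    using P PT A Dc PPT PTP by (intro similar_mat_witI[of _ _ n]) auto
  hence "char_poly A = char_poly D" by (intro char_poly_similar) (auto simp: similar_mat_def)
  also have "\<dots> = (\<Prod>a\<leftarrow>diag_mat D. [:- a, 1:])"
    using diag Dc by (intro char_poly_upper_triangular) (auto simp: D_def diagonal_mat_def upper_triangular_def)
  finally have second: "rev (sorted_list_of_multiset (mset (diag_mat D))) ! 1 \<le> c"
    using \<open>\<not> c < lambda2 A\<close> by (simp add: lambda2_def eigenvalues_desc_def proots_prod_linear_factors)
  obtain j where "\<And>i. i < length (diag_mat D) \<Longrightarrow> i \<noteq> j \<Longrightarrow> diag_mat D ! i \<le> c"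
    using second_largest_le_imp_one_above[OF second] by blast
  hence j: "\<And>i. i < n \<Longrightarrow> i \<noteq> j \<Longrightarrow> D $$ (i,i) \<le> c" using Dc by (auto simp: diag_mat_def)
  have forms: "shifted_form A c x x' =
      (\<Sum>i<n. (D $$ (i,i) - c) * (transpose_mat P *\<^sub>v x) $ i * (transpose_mat P *\<^sub>v x') $ i)"
    if "x \<in> carrier_vec n" "x' \<in> carrier_vec n" for x x'
    by (rule shifted_form_diagonalized[OF A P PPT D_def[symmetric] diag[folded D_def] that])
  have "shifted_form A c u u * shifted_form A c v v \<le> (shifted_form A c u v)\<^sup>2"
    unfolding forms[OF u u] forms[OF v v] forms[OF u v]
    by (rule reverse_cauchy_schwarz_one_positive[of _ j])
      (use j pos forms[OF u u] in auto)
  with det show False by simp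
qed

section \<open>Graph distances and test vectors\<close>

lemma relpowp_2: "(E ^^ 2) x y \<longleftrightarrow> (\<exists>z. E x z \<and> E z y)"
  by (simp add: numeral_2_eq_2 relcompp_apply)

lemma relpowp_3: "(E ^^ 3) x y \<longleftrightarrow> (\<exists>z w. E x z \<and> E z w \<and> E w y)"
  by (simp add: numeral_3_eq_3 relcompp_apply) blast

lemma relpowp_4: "(E ^^ 4) x y \<longleftrightarrow> (\<exists>z w u. E x z \<and> E z w \<and> E w u \<and> E u y)"
  by (simp add: eval_nat_numeral relcompp_apply) blast

lemma relpowp_symmetric:
  assumes "\<And>x y. E x y \<Longrightarrow> E y x" and "(E ^^ k) x y"
  shows "(E ^^ k) y x"
  using assms(2)
proof (induct k arbitrary: x y)
  case (Suc k)
  then obtain z where "(E ^^ k) x z" "E z y" by (blast elim: relpowp_Suc_E)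
  thus ?case using Suc(1) assms(1) by (blast intro: relpowp_Suc_I2)
qed simp

lemma gdist_eqI:
  "(E ^^ k) x y \<Longrightarrow> (\<And>j. j < k \<Longrightarrow> \<not> (E ^^ j) x y) \<Longrightarrow> gdist E x y = k"
  unfolding gdist_def by (rule Least_equality) (auto simp: not_less[symmetric])

lemma gdist_le: "(E ^^ k) x y \<Longrightarrow> gdist E x y \<le> k"
  unfolding gdist_def by (rule Least_le)

lemma relpowp_gdist: "(E ^^ k) x y \<Longrightarrow> (E ^^ gdist E x y) x y"
  unfolding gdist_def by (rule LeastI)

lemma gdist_commute: "(\<And>x y. E x y \<Longrightarrow> E y x) \<Longrightarrow> gdist E x y = gdist E y x"
  unfolding gdist_def by (metis relpowp_symmetric)

lemma gdist_self [simp]: "gdist E x x = 0"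
  by (rule gdist_eqI) auto

lemma gdist_eq_1: "E x y \<Longrightarrow> x \<noteq> y \<Longrightarrow> gdist E x y = 1"
  by (rule gdist_eqI) auto

lemma gdist_eq_2: "E x z \<Longrightarrow> E z y \<Longrightarrow> \<not> E x y \<Longrightarrow> x \<noteq> y \<Longrightarrow> gdist E x y = 2"
  by (rule gdist_eqI) (auto simp: relpowp_2 less_2_cases_iff)

lemma gdist_eq_3:
  "E x z \<Longrightarrow> E z w \<Longrightarrow> E w y \<Longrightarrow> \<not> E x y \<Longrightarrow> x \<noteq> y \<Longrightarrow> (\<And>u. E x u \<Longrightarrow> \<not> E u y)
    \<Longrightarrow> gdist E x y = 3"
  by (rule gdist_eqI) (auto simp: relpowp_2 relpowp_3 less_Suc_eq numeral_3_eq_3)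

lemma distance_matrix_carrier: "distance_matrix n E \<in> carrier_mat n n"
  by (simp add: distance_matrix_def)

lemma transpose_distance_matrix:
  "simple_graph n E \<Longrightarrow> transpose_mat (distance_matrix n E) = distance_matrix n E"
  unfolding simple_graph_def distance_matrix_def by (rule eq_matI) (auto intro: gdist_commute)

definition vertex_vec :: "nat \<Rightarrow> nat list \<Rightarrow> real list \<Rightarrow> real vec" where
  "vertex_vec n vs a = vec n (\<lambda>i. \<Sum>l<length vs. if i = vs ! l then a ! l else 0)"

lemma vertex_vec_carrier [simp]: "vertex_vec n vs a \<in> carrier_vec n"
  by (simp add: vertex_vec_def)

lemma index_vertex_vec: "i < n \<Longrightarrow> vertex_vec n vs a $ i = (\<Sum>l<length vs. if i = vs ! l then a ! l else 0)"
  by (simp add: vertex_vec_def)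

lemma mult_mat_vertex_vec:
  fixes M :: "real mat"
  assumes M: "M \<in> carrier_mat n n" and vs: "set vs \<subseteq> {..<n}" and i: "i < n"
  shows "(M *\<^sub>v vertex_vec n vs b) $ i = (\<Sum>m<length vs. b ! m * M $$ (i, vs ! m))"
proof -
  have vs_lt: "\<And>m. m < length vs \<Longrightarrow> vs ! m < n" using vs nth_mem by blast
  have "(M *\<^sub>v vertex_vec n vs b) $ i = (\<Sum>j<n. M $$ (i,j) * (\<Sum>m<length vs. if j = vs ! m then b ! m else 0))"
    using i M by (simp add: vertex_vec_def scalar_prod_def lessThan_atLeast0 row_def)
  also have "\<dots> = (\<Sum>j<n. \<Sum>m<length vs. if j = vs ! m then M $$ (i,j) * b ! m else 0)"
    by (simp add: sum_distrib_left if_distrib[of "\<lambda>x. _ * x"] cong: if_cong)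
  also have "\<dots> = (\<Sum>m<length vs. \<Sum>j<n. if j = vs ! m then M $$ (i,j) * b ! m else 0)"
    by (rule sum.swap)
  also have "\<dots> = (\<Sum>m<length vs. b ! m * M $$ (i, vs ! m))"
    using vs_lt by (intro sum.cong[OF refl]) (simp add: mult.commute)
  finally show ?thesis .
qed

lemma vertex_vec_bilinear:
  fixes M :: "real mat"
  assumes M: "M \<in> carrier_mat n n" and vs: "set vs \<subseteq> {..<n}"
  shows "vertex_vec n vs a \<bullet> (M *\<^sub>v vertex_vec n vs b)
     = (\<Sum>l<length vs. \<Sum>m<length vs. a ! l * b ! m * M $$ (vs ! l, vs ! m))"
proof -
  have vs_lt: "\<And>l. l < length vs \<Longrightarrow> vs ! l < n" using vs nth_mem by blast
  have "vertex_vec n vs a \<bullet> (M *\<^sub>v vertex_vec n vs b)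
     = (\<Sum>i<n. vertex_vec n vs a $ i * (M *\<^sub>v vertex_vec n vs b) $ i)"
    using M unfolding scalar_prod_def lessThan_atLeast0 by simp
  also have "\<dots> = (\<Sum>i<n. \<Sum>l<length vs. if i = vs ! l then a ! l * (\<Sum>m<length vs. b ! m * M $$ (i, vs ! m)) else 0)"
    by (intro sum.cong refl) (simp add: index_vertex_vec mult_mat_vertex_vec[OF M vs] sum_distrib_right
        if_distrib[of "\<lambda>x. x * _"] cong: if_cong)
  also have "\<dots> = (\<Sum>l<length vs. \<Sum>i<n. if i = vs ! l then a ! l * (\<Sum>m<length vs. b ! m * M $$ (i, vs ! m)) else 0)"
    by (rule sum.swap)
  also have "\<dots> = (\<Sum>l<length vs. \<Sum>m<length vs. a ! l * b ! m * M $$ (vs ! l, vs ! m))"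
    using vs_lt by (intro sum.cong[OF refl]) (simp add: sum_distrib_left mult.assoc)
  finally show ?thesis .
qed

definition pattern_form :: "real \<Rightarrow> nat list list \<Rightarrow> real list \<Rightarrow> real list \<Rightarrow> real" where
  "pattern_form c T a b =
     (\<Sum>l<length a. \<Sum>m<length a. a ! l * b ! m * (real (T ! l ! m) - c * (if l = m then 1 else 0)))"

theorem lambda2_distance_matrix_gt:
  assumes G: "simple_graph n E" and vs: "distinct vs" "set vs \<subseteq> {..<n}"
    and T: "map (\<lambda>x. map (gdist E x) vs) vs = T"
    and len: "length a = length vs" "length b = length vs"
    and pos: "pattern_form c T a a > 0"
    and det: "pattern_form c T a a * pattern_form c T b b > (pattern_form c T a b)\<^sup>2"
  shows "c < lambda2 (distance_matrix n E)"
proof -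
  define D where "D = distance_matrix n E"
  have D: "D \<in> carrier_mat n n" unfolding D_def by (rule distance_matrix_carrier)
  have D_T: "D $$ (vs ! l, vs ! m) = real (T ! l ! m)" if "l < length vs" "m < length vs" for l m
    using that vs(2) T[symmetric] nth_mem[OF that(1)] nth_mem[OF that(2)]
    by (auto simp: D_def distance_matrix_def subset_iff)
  have form: "shifted_form D c (vertex_vec n vs x) (vertex_vec n vs y) = pattern_form c T x y"
    if "length x = length vs" for x y
  proof -
    have "vertex_vec n vs x \<bullet> vertex_vec n vs y = vertex_vec n vs x \<bullet> (1\<^sub>m n *\<^sub>v vertex_vec n vs y)" by simp
    also have "\<dots> = (\<Sum>l<length vs. \<Sum>m<length vs. x ! l * y ! m * (if l = m then 1 else 0))"
      unfolding vertex_vec_bilinear[OF one_carrier_mat vs(2)]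
      using vs by (intro sum.cong refl) (auto simp: nth_eq_iff_index_eq subset_iff)
    finally show ?thesis
      unfolding shifted_form_def vertex_vec_bilinear[OF D vs(2)] pattern_form_def that
      by (simp add: D_T sum_distrib_left sum_subtractf[symmetric] algebra_simps)
  qed
  show ?thesis unfolding D_def[symmetric]
  proof (rule lambda2_gt_if_shifted_form_pos_def[OF D _ vertex_vec_carrier[of n vs a] vertex_vec_carrier[of n vs b]])
    show "transpose_mat D = D" unfolding D_def by (rule transpose_distance_matrix[OF G])
  qed (use form len pos det in auto)
qed

section \<open>Graphs given by enumerations of their vertices\<close>

lemma graph_iso_by_enumeration:
  assumes vs: "distinct vs" "set vs = {0..<n}"
    and adj: "\<And>i j. i < n \<Longrightarrow> j < n \<Longrightarrow> E (vs ! i) (vs ! j) \<longleftrightarrow> F i j"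
  shows "graph_iso n E n F"
proof -
  have len: "length vs = n" using distinct_card[OF vs(1)] vs(2) by simp
  have bij: "bij_betw ((!) vs) {0..<n} {0..<n}"
    using bij_betw_nth[OF vs(1), of "{..<length vs}" "set vs"] len vs(2) by (simp add: lessThan_atLeast0)
  define f where "f = inv_into {0..<n} ((!) vs)"
  have f: "bij_betw f {0..<n} {0..<n}" unfolding f_def by (rule bij_betw_inv_into[OF bij])
  have vs_f: "vs ! f x = x" if "x < n" for x
    unfolding f_def using that bij by (simp add: bij_betw_def f_inv_into_f)
  have f_less: "f x < n" if "x < n" for x using f that by (auto simp: bij_betw_def)
  show ?thesis unfolding graph_iso_def
    using f adj[OF f_less f_less] vs_f by (intro exI[of _ f]) metis
qed

lemma graph_iso_complete_graph:
  assumes "\<And>x y. x < n \<Longrightarrow> y < n \<Longrightarrow> E x y \<longleftrightarrow> x \<noteq> y"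
  shows "graph_iso n E n (complete_graph n)"
  by (rule graph_iso_by_enumeration[of "[0..<n]"]) (use assms in \<open>auto simp: complete_graph_def\<close>)

text \<open>Vertex \<open>Suc j\<close> of \<open>Kcliques ns\<close> is entry \<open>j\<close> of the concatenated blocks; vertex \<open>0\<close> is the
  dominating one.\<close>

lemma block_of_concat:
  assumes "j < length (concat ls)"
  shows "\<exists>i < length ls. concat ls ! j \<in> set (ls ! i) \<and> block_of (map length ls) (Suc j) = i"
  using assms
proof (induct ls arbitrary: j)
  case (Cons a ls)
  show ?case
  proof (cases "j < length a")
    case True
    have "block_of (map length (a # ls)) (Suc j) = 0"
      unfolding block_of_def using True by (intro Least_equality) auto
    thus ?thesis using True by (auto simp: nth_append)
  next
    case False
    define j' where "j' = j - length a"
    have j': "j' < length (concat ls)" using Cons(2) False unfolding j'_def by simp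
    obtain i where i: "i < length ls" "concat ls ! j' \<in> set (ls ! i)" "block_of (map length ls) (Suc j') = i"
      using Cons(1)[OF j'] by blast
    let ?P = "\<lambda>i. Suc j \<le> sum_list (take (Suc i) (map length (a # ls)))"
    have "?P (length ls)" using Cons(2) by (simp add: length_concat)
    hence "(LEAST i. ?P i) = Suc (LEAST m. ?P (Suc m))" by (rule Least_Suc) (use False in simp)
    also have "(LEAST m. ?P (Suc m)) = (LEAST m. Suc j' \<le> sum_list (take (Suc m) (map length ls)))"
      using False unfolding j'_def by (intro arg_cong[where f = Least] ext) auto
    finally have "block_of (map length (a # ls)) (Suc j) = Suc i" using i(3) unfolding block_of_def by simp
    thus ?thesis using i False unfolding j'_def by (auto simp: nth_append intro!: exI[of _ "Suc i"])
  qed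
qed simp

lemma graph_iso_Kst_by_enumeration:
  assumes vs: "distinct vs" "set vs = {0..<s + t}" and ts: "t \<le> s"
    and sym: "\<And>x y. E x y \<Longrightarrow> E y x"
    and clique: "\<And>i j. i < s \<Longrightarrow> j < s \<Longrightarrow> E (vs ! i) (vs ! j) \<longleftrightarrow> i \<noteq> j"
    and pendant: "\<And>i j. i < s \<Longrightarrow> s \<le> j \<Longrightarrow> j < s + t \<Longrightarrow> E (vs ! i) (vs ! j) \<longleftrightarrow> i = j - s"
    and independent: "\<And>i j. s \<le> i \<Longrightarrow> s \<le> j \<Longrightarrow> i < s + t \<Longrightarrow> j < s + t \<Longrightarrow> \<not> E (vs ! i) (vs ! j)"
  shows "graph_iso (s + t) E (s + t) (Kst s t)"
proof (rule graph_iso_by_enumeration[OF vs])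
  fix i j assume ij: "i < s + t" "j < s + t"
  have pe: "pendant_edge s t x y \<longleftrightarrow> s \<le> x \<and> y = x - s" if "x < s + t" for x y
    using that unfolding pendant_edge_def by auto
  consider "i < s" "j < s" | "i < s" "s \<le> j" | "s \<le> i" "j < s" | "s \<le> i" "s \<le> j" by linarith
  thus "E (vs ! i) (vs ! j) \<longleftrightarrow> Kst s t i j"
  proof cases
    case 1
    thus ?thesis using clique unfolding Kst_def pe[OF ij(1)] pe[OF ij(2)] by auto
  next
    case 2
    thus ?thesis using pendant[OF 2 ij(2)] unfolding Kst_def pe[OF ij(1)] pe[OF ij(2)] by auto
  next
    case 3
    thus ?thesis using pendant[OF 3(2,1) ij(1)] sym unfolding Kst_def pe[OF ij(1)] pe[OF ij(2)] by auto
  next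
    case 4
    thus ?thesis using independent[OF 4 ij] ij ts unfolding Kst_def pe[OF ij(1)] pe[OF ij(2)] by auto
  qed
qed

lemma quotient_enumeration:
  fixes R :: "'a::linorder set"
  assumes fin: "finite R" and equiv: "equiv R r"
  obtains ls where "distinct (concat ls)" "set (concat ls) = R" "\<forall>l\<in>set ls. l \<noteq> []"
    "\<And>i j x y. i < length ls \<Longrightarrow> j < length ls \<Longrightarrow> x \<in> set (ls ! i) \<Longrightarrow> y \<in> set (ls ! j)
      \<Longrightarrow> (x, y) \<in> r \<longleftrightarrow> i = j"
proof -
  have "finite (R // r)" using fin equiv by (intro finite_quotient) (auto dest: equiv_type)
  then obtain L where L: "set L = R // r" "distinct L" using finite_distinct_list by blast
  have fin_L: "finite C" if "C \<in> set L" for C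
  proof -
    have "C \<subseteq> R" using that L(1) in_quotient_imp_subset[OF equiv] by blast
    thus ?thesis using fin finite_subset by blast
  qed
  define ls where "ls = map sorted_list_of_set L"
  have set_ls: "set (ls ! i) = L ! i" if "i < length ls" for i
    using that fin_L[OF nth_mem] unfolding ls_def by simp
  have L_class: "L ! i \<in> R // r" if "i < length ls" for i
    using that L(1) nth_mem[of i L] unfolding ls_def by simp
  have inj: "inj_on sorted_list_of_set (set L)"
  proof (rule inj_onI)
    fix C D assume "C \<in> set L" "D \<in> set L" "sorted_list_of_set C = sorted_list_of_set D"
    hence "set (sorted_list_of_set C) = set (sorted_list_of_set D)" by simp
    thus "C = D" using fin_L \<open>C \<in> set L\<close> \<open>D \<in> set L\<close> by simp
  qed
  show ?thesis
  proof
    show "distinct (concat ls)"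
    proof (rule distinct_concat)
      show "distinct ls" unfolding ls_def using L(2) inj by (simp add: distinct_map)
      show "\<And>ys. ys \<in> set ls \<Longrightarrow> distinct ys" unfolding ls_def by auto
      fix ys zs assume "ys \<in> set ls" "zs \<in> set ls" "ys \<noteq> zs"
      then obtain C D where CD: "C \<in> set L" "D \<in> set L" "ys = sorted_list_of_set C" "zs = sorted_list_of_set D"
        unfolding ls_def by auto
      hence "C \<noteq> D" using \<open>ys \<noteq> zs\<close> by blast
      hence "C \<inter> D = {}" using quotient_disj[OF equiv, of C D] CD(1,2) L(1) by blast
      thus "set ys \<inter> set zs = {}" using CD fin_L by simp
    qed
    have "set (concat ls) = \<Union> (set L)" unfolding ls_def using fin_L by auto
    thus "set (concat ls) = R" using L(1) Union_quotient[OF equiv] by simp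
    show "\<forall>l\<in>set ls. l \<noteq> []"
    proof
      fix l assume "l \<in> set ls"
      then obtain C where "C \<in> set L" "l = sorted_list_of_set C" unfolding ls_def by auto
      moreover have "C \<noteq> {}" using in_quotient_imp_non_empty[OF equiv] L(1) calculation(1) by blast
      ultimately show "l \<noteq> []" using fin_L by simp
    qed
    show "(x, y) \<in> r \<longleftrightarrow> i = j"
      if ij: "i < length ls" "j < length ls" and xy: "x \<in> set (ls ! i)" "y \<in> set (ls ! j)" for i j x y
    proof -
      have "(x, y) \<in> r \<longleftrightarrow> L ! i = L ! j"
        using quotient_eq_iff[OF equiv L_class[OF ij(1)] L_class[OF ij(2)]] xy set_ls[OF ij(1)] set_ls[OF ij(2)]
        by simp
      also have "\<dots> \<longleftrightarrow> i = j" using nth_eq_iff_index_eq[OF L(2)] ij unfolding ls_def by simp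
      finally show ?thesis .
    qed
  qed
qed

lemma concat_blocks_adjacent:
  assumes ls: "distinct (concat ls)"
    and blocks: "\<And>i j x y. i < length ls \<Longrightarrow> j < length ls \<Longrightarrow> x \<in> set (ls ! i) \<Longrightarrow> y \<in> set (ls ! j)
      \<Longrightarrow> E x y \<longleftrightarrow> x \<noteq> y \<and> i = j"
    and ij: "i < length (concat ls)" "j < length (concat ls)"
  shows "E (concat ls ! i) (concat ls ! j) \<longleftrightarrow>
    i \<noteq> j \<and> block_of (map length ls) (Suc i) = block_of (map length ls) (Suc j)"
proof -
  obtain bi bj where "bi < length ls" "concat ls ! i \<in> set (ls ! bi)" "block_of (map length ls) (Suc i) = bi"
    "bj < length ls" "concat ls ! j \<in> set (ls ! bj)" "block_of (map length ls) (Suc j) = bj"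
    using block_of_concat[OF ij(1)] block_of_concat[OF ij(2)] by blast
  thus ?thesis using blocks nth_eq_iff_index_eq[OF ls ij] by auto
qed

text \<open>A vertex \<open>v\<close> joined to a disjoint union of cliques: listing \<open>v\<close> first and then the cliques
  one after the other exhibits \<open>K\<^sub>n\<close> (at most one clique) or \<open>K\<^sub>n\<^bsup>n\<^sub>1, \<dots>, n\<^sub>k\<^esub>\<close>.\<close>

lemma graph_iso_cone_over_cliques:
  assumes sym: "\<And>x y. E x y \<Longrightarrow> E y x" and irrefl: "\<And>x. \<not> E x x"
    and v: "v < n" "\<And>u. u < n \<Longrightarrow> u \<noteq> v \<Longrightarrow> E v u"
    and ls: "distinct (concat ls)" "set (concat ls) = {0..<n} - {v}" "\<forall>l\<in>set ls. l \<noteq> []"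
    and blocks: "\<And>i j x y. i < length ls \<Longrightarrow> j < length ls \<Longrightarrow> x \<in> set (ls ! i) \<Longrightarrow> y \<in> set (ls ! j)
      \<Longrightarrow> E x y \<longleftrightarrow> x \<noteq> y \<and> i = j"
  shows "graph_iso n E n (complete_graph n) \<or>
    (\<exists>ns. length ns \<ge> 2 \<and> (\<forall>m\<in>set ns. 0 < m) \<and> sum_list ns + 1 = n \<and> graph_iso n E n (Kcliques ns))"
proof -
  define vs where "vs = v # concat ls"
  define ns where "ns = map length ls"
  have distinct: "distinct vs" and set_vs: "set vs = {0..<n}" using ls v unfolding vs_def by auto
  have len: "length vs = n" using distinct_card[OF distinct] set_vs by simp
  have sum_ns: "sum_list ns + 1 = n" using len unfolding vs_def ns_def by (simp add: length_concat)
  have E_v: "E (vs ! 0) (vs ! k) \<longleftrightarrow> k \<noteq> 0" "E (vs ! k) (vs ! 0) \<longleftrightarrow> k \<noteq> 0" if "k < n" for k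
  proof -
    have "vs ! k \<in> set vs" using that len by simp
    hence "vs ! k < n" using set_vs by auto
    moreover have "vs ! k = v \<longleftrightarrow> k = 0"
      using that len nth_eq_iff_index_eq[OF distinct, of k 0] unfolding vs_def by auto
    ultimately show "E (vs ! 0) (vs ! k) \<longleftrightarrow> k \<noteq> 0" "E (vs ! k) (vs ! 0) \<longleftrightarrow> k \<noteq> 0"
      unfolding vs_def using v(2) irrefl sym by (metis nth_Cons_0)+
  qed
  have block_adj: "E (vs ! i) (vs ! j) \<longleftrightarrow> i \<noteq> j \<and> block_of ns i = block_of ns j"
    if "0 < i" "0 < j" "i < n" "j < n" for i j
    using concat_blocks_adjacent[OF ls(1) blocks, of "i - 1" "j - 1"] that len unfolding vs_def ns_def by auto
  show ?thesis
  proof (cases "length ls \<ge> 2")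
    case True
    have "E (vs ! i) (vs ! j) \<longleftrightarrow> Kcliques ns i j" if ij: "i < n" "j < n" for i j
      using E_v[OF ij(1)] E_v[OF ij(2)] block_adj[OF _ _ ij] ij sum_ns unfolding Kcliques_def by auto
    hence "graph_iso n E n (Kcliques ns)" by (rule graph_iso_by_enumeration[OF distinct set_vs])
    moreover have "\<forall>m\<in>set ns. 0 < m" using ls(3) unfolding ns_def by auto
    moreover have "length ns \<ge> 2" using True unfolding ns_def by simp
    ultimately show ?thesis using sum_ns by blast
  next
    case False
    have same_block: "block_of ns i = block_of ns j" if "0 < i" "0 < j" "i < n" "j < n" for i j
      using block_of_concat[of "i - 1" ls] block_of_concat[of "j - 1" ls] that len False
      unfolding vs_def ns_def by fastforce
    have "E (vs ! i) (vs ! j) \<longleftrightarrow> i \<noteq> j" if ij: "i < n" "j < n" for i j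
      using E_v[OF ij(1)] E_v[OF ij(2)] block_adj[OF _ _ ij] same_block[OF _ _ ij] by auto
    hence "graph_iso n E n (complete_graph n)"
      by (intro graph_iso_by_enumeration[OF distinct set_vs]) (simp add: complete_graph_def)
    thus ?thesis by blast
  qed
qed

text \<open>A graph on a finite set in which adjacency is transitive on distinct vertices is a
  disjoint union of cliques: the classes of the equivalence "equal or adjacent".\<close>

lemma cluster_graph_blocks:
  fixes R :: "'a::linorder set"
  assumes fin: "finite R" and sym: "\<And>x y. E x y \<Longrightarrow> E y x" and irrefl: "\<And>x. \<not> E x x"
    and trans: "\<And>x y z. x \<in> R \<Longrightarrow> y \<in> R \<Longrightarrow> z \<in> R \<Longrightarrow> E x y \<Longrightarrow> E y z \<Longrightarrow> x \<noteq> z \<Longrightarrow> E x z"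
  obtains ls where "distinct (concat ls)" "set (concat ls) = R" "\<forall>l\<in>set ls. l \<noteq> []"
    "\<And>i j x y. i < length ls \<Longrightarrow> j < length ls \<Longrightarrow> x \<in> set (ls ! i) \<Longrightarrow> y \<in> set (ls ! j)
      \<Longrightarrow> E x y \<longleftrightarrow> x \<noteq> y \<and> i = j"
proof -
  define r where "r = {(x, y). x \<in> R \<and> y \<in> R \<and> (x = y \<or> E x y)}"
  have "trans r"
  proof (rule transI)
    fix x y z assume "(x, y) \<in> r" "(y, z) \<in> r"
    thus "(x, z) \<in> r" unfolding r_def using trans[of x y z] by blast
  qed
  moreover have "refl_on R r" unfolding refl_on_def r_def by blast
  moreover have "sym r" unfolding sym_def r_def using sym by blast
  moreover have "r \<subseteq> R \<times> R" unfolding r_def by blast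
  ultimately have "equiv R r" by (simp add: equiv_def)
  then obtain ls where ls: "distinct (concat ls)" "set (concat ls) = R" "\<forall>l\<in>set ls. l \<noteq> []"
    and classes: "\<And>i j x y. i < length ls \<Longrightarrow> j < length ls \<Longrightarrow> x \<in> set (ls ! i) \<Longrightarrow> y \<in> set (ls ! j)
      \<Longrightarrow> (x, y) \<in> r \<longleftrightarrow> i = j"
    using quotient_enumeration[OF fin] by blast
  have "E x y \<longleftrightarrow> x \<noteq> y \<and> i = j"
    if ij: "i < length ls" "j < length ls" and xy: "x \<in> set (ls ! i)" "y \<in> set (ls ! j)" for i j x y
  proof -
    have "x \<in> R" "y \<in> R" using xy ij ls(2) nth_mem by fastforce+
    hence "E x y \<longleftrightarrow> x \<noteq> y \<and> (x, y) \<in> r" using irrefl unfolding r_def by auto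
    thus ?thesis using classes[OF ij xy] by simp
  qed
  with ls that show ?thesis by blast
qed

section \<open>Forbidden distance patterns\<close>

text \<open>The constant \<open>-0.5691\<close> is a rational upper bound for \<open>(17 - \<surd>329) / 2 \<approx> -0.56918\<close>,
  against which the test vectors below can be checked by exact arithmetic.\<close>

lemma lambda2_bound: "(17 - sqrt 329) / 2 \<le> (-5691/10000 :: real)"
proof -
  have "181382 / 10000 \<le> sqrt 329" by (rule real_le_rsqrt) (simp add: power2_eq_square)
  thus ?thesis by simp
qed

locale small_lambda2_graph =
  fixes n :: nat and E :: "nat \<Rightarrow> nat \<Rightarrow> bool"
  assumes simple: "simple_graph n E" and connected: "graph_connected n E"
    and lambda2_small: "lambda2 (distance_matrix n E) \<le> -5691/10000"
begin

lemma E_sym: "E x y \<Longrightarrow> E y x"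
  using simple unfolding simple_graph_def by blast

lemma E_irrefl: "\<not> E x x"
  using simple unfolding simple_graph_def by blast

lemma E_less: "E x y \<Longrightarrow> x < n" "E x y \<Longrightarrow> y < n"
  using simple unfolding simple_graph_def by blast+

lemma gdist_sym: "gdist E x y = gdist E y x"
  by (rule gdist_commute) (rule E_sym)

lemma gdist_edge: "E x y \<Longrightarrow> gdist E x y = 1"
  using gdist_eq_1 E_irrefl by metis

lemma forbidden_distance_pattern:
  assumes "distinct vs" "set vs \<subseteq> {..<n}" "map (\<lambda>x. map (gdist E x) vs) vs = T"
    and "length a = length vs" "length b = length vs"
    and "pattern_form (-5691/10000) T a a > 0"
    and "pattern_form (-5691/10000) T a a * pattern_form (-5691/10000) T b b
      > (pattern_form (-5691/10000) T a b)\<^sup>2"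
  shows False
  using lambda2_distance_matrix_gt[OF simple assms] lambda2_small by simp

lemma no_induced_C4:
  assumes "E a b" "E b c" "E c d" "E d a" "\<not> E a c" "\<not> E b d" "a \<noteq> c" "b \<noteq> d"
  shows False
proof (rule forbidden_distance_pattern[of "[a,b,c,d]" "[[0,1,2,1],[1,0,1,2],[2,1,0,1],[1,2,1,0]]"
      "[1,1,1,1]" "[-1,1,-1,1]"])
  have "gdist E a b = 1" "gdist E b c = 1" "gdist E c d = 1" "gdist E d a = 1"
    "gdist E a c = 2" "gdist E b d = 2"
    using assms by (blast intro: gdist_edge gdist_eq_2)+
  thus "map (\<lambda>x. map (gdist E x) [a,b,c,d]) [a,b,c,d] = [[0,1,2,1],[1,0,1,2],[2,1,0,1],[1,2,1,0]]"
    by (simp add: gdist_sym)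
qed (use assms E_irrefl E_less in \<open>auto simp: pattern_form_def eval_nat_numeral lessThan_Suc\<close>)

lemma no_induced_diamond:
  assumes "E p q" "E p r" "E p s" "E q r" "E r s" "\<not> E q s" "q \<noteq> s"
  shows False
proof (rule forbidden_distance_pattern[of "[p,q,r,s]" "[[0,1,1,1],[1,0,1,2],[1,1,0,1],[1,2,1,0]]"
      "[0,1,0,1]" "[1,0,1,0]"])
  have "gdist E p q = 1" "gdist E p r = 1" "gdist E p s = 1" "gdist E q r = 1" "gdist E r s = 1"
    "gdist E q s = 2"
    using assms by (blast intro: gdist_edge gdist_eq_2)+
  thus "map (\<lambda>x. map (gdist E x) [p,q,r,s]) [p,q,r,s] = [[0,1,1,1],[1,0,1,2],[1,1,0,1],[1,2,1,0]]"
    by (simp add: gdist_sym)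
qed (use assms E_irrefl E_less in \<open>auto simp: pattern_form_def eval_nat_numeral lessThan_Suc\<close>)

lemma no_induced_P4_ends_at_distance_2:
  assumes "E a b" "E b c" "E c d" "\<not> E a c" "\<not> E b d" "\<not> E a d" "a \<noteq> c" "b \<noteq> d" "a \<noteq> d"
    and "E a e" "E e d"
  shows False
proof (rule forbidden_distance_pattern[of "[a,b,c,d]" "[[0,1,2,2],[1,0,1,2],[2,1,0,1],[2,2,1,0]]"
      "[1,1,1,1]" "[1,-1,1,-1]"])
  have "gdist E a b = 1" "gdist E b c = 1" "gdist E c d = 1"
    "gdist E a c = 2" "gdist E b d = 2" "gdist E a d = 2"
    using assms by (blast intro: gdist_edge gdist_eq_2)+
  thus "map (\<lambda>x. map (gdist E x) [a,b,c,d]) [a,b,c,d] = [[0,1,2,2],[1,0,1,2],[2,1,0,1],[2,2,1,0]]"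
    by (simp add: gdist_sym)
qed (use assms E_irrefl E_less in \<open>auto simp: pattern_form_def eval_nat_numeral lessThan_Suc\<close>)

lemma no_isometric_fork:
  assumes "E x p" "E x q" "E x w" "E w y"
    and "\<not> E p q" "\<not> E p w" "\<not> E q w" "\<not> E x y" "p \<noteq> q" "p \<noteq> w" "q \<noteq> w" "x \<noteq> y"
    and "\<not> E p y" "p \<noteq> y" "\<And>v. E p v \<Longrightarrow> \<not> E v y"
    and "\<not> E q y" "q \<noteq> y" "\<And>v. E q v \<Longrightarrow> \<not> E v y"
  shows False
proof (rule forbidden_distance_pattern[of "[x,p,q,w,y]"
      "[[0,1,1,1,2],[1,0,2,2,3],[1,2,0,2,3],[1,2,2,0,1],[2,3,3,1,0]]" "[1,1,1,1,1]" "[-2,0,0,1,-1]"])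
  have "gdist E x p = 1" "gdist E x q = 1" "gdist E x w = 1" "gdist E w y = 1"
    "gdist E x y = 2" "gdist E p q = 2" "gdist E p w = 2" "gdist E q w = 2"
    "gdist E p y = 3" "gdist E q y = 3"
    using assms E_sym by (blast intro: gdist_edge gdist_eq_2 gdist_eq_3)+
  thus "map (\<lambda>u. map (gdist E u) [x,p,q,w,y]) [x,p,q,w,y]
      = [[0,1,1,1,2],[1,0,2,2,3],[1,2,0,2,3],[1,2,2,0,1],[2,3,3,1,0]]"
    by (simp add: gdist_sym)
qed (use assms E_irrefl E_less in \<open>auto simp: pattern_form_def eval_nat_numeral lessThan_Suc\<close>)

lemma no_isometric_3_2_tadpole:
  assumes "E x y" "E x z" "E y z" "E x p" "E p q"
    and "\<not> E y p" "\<not> E z p" "\<not> E x q" "y \<noteq> p" "z \<noteq> p" "x \<noteq> q"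
    and "\<not> E y q" "y \<noteq> q" "\<And>v. E y v \<Longrightarrow> \<not> E v q"
    and "\<not> E z q" "z \<noteq> q" "\<And>v. E z v \<Longrightarrow> \<not> E v q"
  shows False
proof (rule forbidden_distance_pattern[of "[x,y,z,p,q]"
      "[[0,1,1,1,2],[1,0,1,2,3],[1,1,0,2,3],[1,2,2,0,1],[2,3,3,1,0]]" "[17,23,23,20,27]" "[-35,8,8,32,-14]"])
  have "gdist E x y = 1" "gdist E x z = 1" "gdist E x p = 1" "gdist E y z = 1" "gdist E p q = 1"
    "gdist E x q = 2" "gdist E y p = 2" "gdist E z p = 2"
    "gdist E y q = 3" "gdist E z q = 3"
    using assms E_sym by (blast intro: gdist_edge gdist_eq_2 gdist_eq_3)+
  thus "map (\<lambda>u. map (gdist E u) [x,y,z,p,q]) [x,y,z,p,q]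
      = [[0,1,1,1,2],[1,0,1,2,3],[1,1,0,2,3],[1,2,2,0,1],[2,3,3,1,0]]"
    by (simp add: gdist_sym)
qed (use assms E_irrefl E_less in \<open>auto simp: pattern_form_def eval_nat_numeral lessThan_Suc\<close>)

text \<open>In an induced path \<open>a\<^sub>0 \<dots> a\<^sub>4\<close> whose inner distances are those of the path, the distance
  between the ends is \<open>2\<close>, \<open>3\<close> or \<open>4\<close>; each case has its own pair of test vectors.\<close>

lemma no_induced_P5:
  assumes path: "E a0 a1" "E a1 a2" "E a2 a3" "E a3 a4"
    and "\<not> E a0 a2" "a0 \<noteq> a2" "\<not> E a1 a3" "a1 \<noteq> a3" "\<not> E a2 a4" "a2 \<noteq> a4"
    and "\<not> E a0 a3" "a0 \<noteq> a3" "\<And>v. E a0 v \<Longrightarrow> \<not> E v a3"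
    and "\<not> E a1 a4" "a1 \<noteq> a4" "\<And>v. E a1 v \<Longrightarrow> \<not> E v a4"
    and ends: "\<not> E a0 a4" "a0 \<noteq> a4"
  shows False
proof -
  have walk: "(E ^^ 4) a0 a4" using path by (auto simp: relpowp_4)
  have walk_gdist: "(E ^^ gdist E a0 a4) a0 a4" by (rule relpowp_gdist[OF walk])
  have "gdist E a0 a4 \<noteq> 0" using walk_gdist ends(2) by (metis relpowp.simps(1))
  moreover have "gdist E a0 a4 \<noteq> 1" using walk_gdist ends(1) by (metis relpowp_1)
  moreover have "gdist E a0 a4 \<le> 4" by (rule gdist_le[OF walk])
  ultimately consider "gdist E a0 a4 = 2" | "gdist E a0 a4 = 3" | "gdist E a0 a4 = 4" by linarith
  moreover have short: "gdist E a0 a1 = 1" "gdist E a1 a2 = 1" "gdist E a2 a3 = 1" "gdist E a3 a4 = 1"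
    "gdist E a0 a2 = 2" "gdist E a1 a3 = 2" "gdist E a2 a4 = 2" "gdist E a0 a3 = 3" "gdist E a1 a4 = 3"
    using assms by (blast intro: gdist_edge gdist_eq_2 gdist_eq_3)+
  ultimately show False
  proof cases
    case 1
    show False
      by (rule forbidden_distance_pattern[of "[a0,a1,a2,a3,a4]"
          "[[0,1,2,3,2],[1,0,1,2,3],[2,1,0,1,2],[3,2,1,0,1],[2,3,2,1,0]]" "[1,1,1,1,1]" "[-1,1,0,-1,1]"])
        (use 1 short assms E_irrefl E_less in \<open>auto simp: gdist_sym pattern_form_def eval_nat_numeral lessThan_Suc\<close>)
  next
    case 2
    show False
      by (rule forbidden_distance_pattern[of "[a0,a1,a2,a3,a4]"
          "[[0,1,2,3,3],[1,0,1,2,3],[2,1,0,1,2],[3,2,1,0,1],[3,3,2,1,0]]" "[1,1,1,1,1]" "[-1,1,0,-1,1]"])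
        (use 2 short assms E_irrefl E_less in \<open>auto simp: gdist_sym pattern_form_def eval_nat_numeral lessThan_Suc\<close>)
  next
    case 3
    show False
      by (rule forbidden_distance_pattern[of "[a0,a1,a2,a3,a4]"
          "[[0,1,2,3,4],[1,0,1,2,3],[2,1,0,1,2],[3,2,1,0,1],[4,3,2,1,0]]" "[2,1,1,1,2]" "[0,-2,2,-2,0]"])
        (use 3 short assms E_irrefl E_less in \<open>auto simp: gdist_sym pattern_form_def eval_nat_numeral lessThan_Suc\<close>)
  qed
qed

section \<open>Pendant and inner vertices\<close>

definition pendant :: "nat \<Rightarrow> bool" where
  "pendant p \<longleftrightarrow> p < n \<and> (\<exists>q. E p q \<and> (\<forall>z. E p z \<longrightarrow> z = q))"

definition inner :: "nat \<Rightarrow> bool" where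
  "inner x \<longleftrightarrow> x < n \<and> \<not> pendant x"

definition dominating :: "nat \<Rightarrow> bool" where
  "dominating v \<longleftrightarrow> v < n \<and> (\<forall>u<n. u \<noteq> v \<longrightarrow> E v u)"

lemma closed_set_contains_vertices:
  assumes "x < n" "x \<in> S" "\<And>x y. x \<in> S \<Longrightarrow> E x y \<Longrightarrow> y \<in> S" "y < n"
  shows "y \<in> S"
proof -
  have "E\<^sup>*\<^sup>* x y" using connected assms(1,4) unfolding graph_connected_def by blast
  thus ?thesis by (induct rule: rtranclp_induct) (use assms in auto)
qed

lemma pendant_unique_neighbour: "pendant p \<Longrightarrow> E p q \<Longrightarrow> E p z \<Longrightarrow> z = q"
  unfolding pendant_def by metis

lemma pendant_or_inner: "x < n \<Longrightarrow> pendant x \<or> inner x"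
  unfolding inner_def by blast

lemma inner_not_pendant: "inner x \<Longrightarrow> \<not> pendant x"
  unfolding inner_def by blast

lemma has_neighbour:
  assumes "2 \<le> n" "x < n"
  obtains y where "E x y"
proof -
  obtain y where "y < n" "y \<noteq> x" using assms by (metis One_nat_def less_2_cases_iff less_le_trans not_less_eq pos2)
  moreover have "y \<in> {x}" if "\<nexists>y. E x y"
    by (rule closed_set_contains_vertices[OF assms(2)]) (use that calculation in auto)
  ultimately show ?thesis using that by blast
qed

lemma inner_other_neighbour:
  assumes "2 \<le> n" "inner x"
  obtains z where "E x z" "z \<noteq> b"
proof -
  obtain y where y: "E x y" using has_neighbour assms unfolding inner_def by blast
  hence "\<exists>z. E x z \<and> z \<noteq> y" using assms unfolding inner_def pendant_def by blast
  thus ?thesis using y that by blast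
qed

lemma neighbour_of_pendant_inner:
  assumes "2 \<le> n" "\<nexists>v. dominating v" "pendant p" "E p q"
  shows "inner q"
proof (rule ccontr)
  assume "\<not> inner q"
  hence q: "pendant q" using E_less assms(4) unfolding inner_def by blast
  have closed: "\<And>a b. a \<in> {p,q} \<Longrightarrow> E a b \<Longrightarrow> b \<in> {p,q}"
    using pendant_unique_neighbour[OF assms(3,4)] pendant_unique_neighbour[OF q E_sym[OF assms(4)]] by auto
  have "dominating p"
    unfolding dominating_def using closed_set_contains_vertices[OF E_less(1)[OF assms(4)] _ closed] assms(4) E_less
    by fastforce
  thus False using assms(2) by blast
qed

text \<open>An induced \<open>P\<^sub>4\<close> cannot start at an inner vertex: the second neighbour of its first vertex
  always completes one of the forbidden configurations.\<close>

lemma inner_not_end_of_induced_P4: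
  assumes n: "2 \<le> n" and a: "inner a"
    and path: "E a b" "E b c" "E c d" "\<not> E a c" "\<not> E b d" "\<not> E a d" "a \<noteq> c" "b \<noteq> d" "a \<noteq> d"
  shows False
proof -
  have no_common: "\<And>v. E a v \<Longrightarrow> \<not> E v d" using no_induced_P4_ends_at_distance_2[OF path] by blast
  obtain a' where a': "E a a'" "a' \<noteq> b" using inner_other_neighbour[OF n a] .
  have a'_ne: "a' \<noteq> c" "a' \<noteq> d" using a' path by auto
  have "\<not> E a' c"
  proof
    assume "E a' c"
    thus False
      using no_induced_diamond[of b a a' c] no_induced_C4[of a b c a'] path a' E_sym by (cases "E a' b") blast+
  qed
  moreover have "\<not> E a' d" using no_common a' by blast
  ultimately show False
  proof (cases "E a' b")
    case True
    show False
    proof (cases "\<exists>m. E a' m \<and> E m d")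
      case True
      thus False using no_induced_P4_ends_at_distance_2[of a' b c d] \<open>E a' b\<close> path \<open>\<not> E a' c\<close> \<open>\<not> E a' d\<close> a'_ne by blast
    next
      case False
      thus False using no_isometric_3_2_tadpole[of b a a' c d] \<open>E a' b\<close> path a' \<open>\<not> E a' c\<close> \<open>\<not> E a' d\<close> a'_ne no_common E_sym
        by blast
    qed
  next
    case False
    show False
    proof (cases "\<exists>m. E a' m \<and> E m c")
      case True
      thus False using no_induced_P4_ends_at_distance_2[of a' a b c] False path a' \<open>\<not> E a' c\<close> a'_ne E_sym by blast
    next
      case no_common': False
      show False using no_induced_P5[of a' a b c d] False path a' \<open>\<not> E a' c\<close> \<open>\<not> E a' d\<close> a'_ne no_common no_common' E_sym
        by blast
    qed
  qed
qed

text \<open>If \<open>v\<close> is not adjacent to all inner vertices, the component of \<open>v\<close> shows one at distance \<open>2\<close>: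
  otherwise \<open>v\<close>, its inner neighbours and the pendant vertices hanging on them would form a closed
  proper subset of the vertex set.\<close>

lemma inner_nonneighbour_at_distance_2:
  assumes n: "2 \<le> n" and v: "inner v" and u: "inner u" "u \<noteq> v" "\<not> E v u"
  obtains u' z where "inner u'" "u' \<noteq> v" "\<not> E v u'" "inner z" "E v z" "E z u'"
proof -
  have "\<exists>u' z. inner u' \<and> u' \<noteq> v \<and> \<not> E v u' \<and> inner z \<and> E v z \<and> E z u'"
  proof (rule ccontr)
    assume none: "\<not> ?thesis"
    define S where
      "S = {x. x = v \<or> (inner x \<and> E v x) \<or> (pendant x \<and> (\<exists>r. (r = v \<or> (inner r \<and> E v r)) \<and> E x r))}"
    have closed: "y \<in> S" if "x \<in> S" "E x y" for x y
    proof -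
      have y: "pendant y \<or> inner y" using pendant_or_inner E_less(2)[OF that(2)] by blast
      from that(1) consider "x = v" | "inner x \<and> E v x"
        | "pendant x \<and> (\<exists>r. (r = v \<or> (inner r \<and> E v r)) \<and> E x r)"
        unfolding S_def by blast
      thus ?thesis
      proof cases
        case 1
        thus ?thesis using y that(2) E_sym unfolding S_def by blast
      next
        case 2
        show ?thesis
        proof (cases "y = v \<or> pendant y")
          case True
          thus ?thesis using 2 that(2) E_sym unfolding S_def by blast
        next
          case False
          hence "inner y" "y \<noteq> v" using y by auto
          hence "E v y" using none 2 that(2) by blast
          thus ?thesis using \<open>inner y\<close> unfolding S_def by blast
        qed
      next
        case 3
        then obtain r where r: "r = v \<or> (inner r \<and> E v r)" "E x r" by blast
        have "y = r" using pendant_unique_neighbour 3 r(2) that(2) by blast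
        thus ?thesis using r unfolding S_def by blast
      qed
    qed
    have "u \<in> S" using closed_set_contains_vertices[of v S u] v u closed unfolding S_def inner_def by blast
    thus False using u unfolding S_def inner_def by blast
  qed
  thus ?thesis using that by blast
qed

definition inner_degree :: "nat \<Rightarrow> nat" where
  "inner_degree x = card {y. inner y \<and> E x y}"

lemma finite_inner_neighbours: "finite {y. inner y \<and> E x y}"
  by (rule finite_subset[of _ "{0..<n}"]) (auto simp: inner_def)

lemma inner_degree_le: "inner_degree x \<le> n"
  unfolding inner_degree_def by (rule order_trans[OF card_mono[of "{0..<n}"]]) (auto simp: inner_def)

text \<open>Moving from \<open>w\<close> to a common neighbour \<open>z\<close> of \<open>w\<close> and \<open>u'\<close> that sees all other inner
  neighbours of \<open>w\<close> gains \<open>w\<close> and \<open>u'\<close> and loses only \<open>z\<close>.\<close>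

lemma inner_degree_increases:
  assumes w: "inner w" and u': "inner u'" "\<not> E w u'" "u' \<noteq> w"
    and z: "inner z" "E w z" "E z u'"
    and sees: "\<And>x. inner x \<Longrightarrow> E w x \<Longrightarrow> x \<noteq> z \<Longrightarrow> E z x"
  shows "inner_degree w < inner_degree z"
proof -
  let ?N = "\<lambda>x. {y. inner y \<and> E x y}"
  have sub: "(?N w - {z}) \<union> {w, u'} \<subseteq> ?N z" using w u' z sees E_sym by auto
  have "card ((?N w - {z}) \<union> {w, u'}) = card (?N w - {z}) + 2"
    using finite_inner_neighbours E_irrefl u' by (subst card_Un_disjoint) auto
  also have "card (?N w - {z}) = inner_degree w - 1"
    unfolding inner_degree_def using z finite_inner_neighbours by (subst card_Diff_singleton) auto
  finally have "inner_degree w - 1 + 2 \<le> inner_degree z"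
    unfolding inner_degree_def[of z] using card_mono[OF finite_inner_neighbours sub] by simp
  moreover have "z \<in> ?N w" using z by simp
  hence "inner_degree w \<ge> 1"
    unfolding inner_degree_def using finite_inner_neighbours by (metis One_nat_def Suc_leI card_gt_0_iff empty_iff)
  ultimately show ?thesis by linarith
qed

text \<open>An inner vertex of maximum inner degree is adjacent to all other inner vertices.\<close>

lemma inner_vertex_adjacent_to_all_inner:
  assumes n: "2 \<le> n" and ex: "inner x0"
  obtains w where "inner w" "\<And>u. inner u \<Longrightarrow> u \<noteq> w \<Longrightarrow> E w u"
proof -
  have "\<forall>x. inner x \<longrightarrow> inner_degree x < Suc n" using inner_degree_le by (simp add: less_Suc_eq_le)
  then obtain w where w: "inner w" and max: "\<And>x. inner x \<Longrightarrow> inner_degree x \<le> inner_degree w"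
    using ex_has_greatest_nat[of inner, OF ex] by blast
  have "E w u" if u: "inner u" "u \<noteq> w" for u
  proof (rule ccontr)
    assume "\<not> E w u"
    then obtain u' z where uz: "inner u'" "u' \<noteq> w" "\<not> E w u'" "inner z" "E w z" "E z u'"
      using inner_nonneighbour_at_distance_2[OF n w u] by blast
    show False
    proof (cases "\<exists>x. inner x \<and> E w x \<and> x \<noteq> z \<and> \<not> E z x")
      case True
      then obtain x where x: "inner x" "E w x" "x \<noteq> z" "\<not> E z x" by blast
      show False
        using no_induced_C4[of x w z u'] inner_not_end_of_induced_P4[OF n x(1), of w z u'] x uz E_sym
        by (cases "E x u'") blast+
    next
      case False
      hence "inner_degree w < inner_degree z" using inner_degree_increases[OF w uz(1,3,2,4,5,6)] by blast
      thus False using max[OF uz(4)] by simp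
    qed
  qed
  thus ?thesis using w that by blast
qed

lemma inner_neighbours_of_universal_inner_adjacent:
  assumes w: "\<And>u. inner u \<Longrightarrow> u \<noteq> w \<Longrightarrow> E w u"
    and "inner x" "inner y" "inner z" "x \<noteq> w" "y \<noteq> w" "z \<noteq> w" "E x y" "E y z" "x \<noteq> z"
  shows "E x z"
  using no_induced_diamond[of w x y z] assms by blast

text \<open>Any neighbour
  \<open>z \<noteq> w\<close> of \<open>y\<close> yields an isometric tadpole (if \<open>z\<close> is inner) or an induced \<open>P\<^sub>5\<close> (if \<open>z\<close> is
  pendant).\<close>

lemma no_pendant_far_from_universal_inner:
  assumes n: "2 \<le> n" and w: "inner w" "\<And>u. inner u \<Longrightarrow> u \<noteq> w \<Longrightarrow> E w u"
    and p: "pendant p" "E p x" "p \<noteq> w" "\<not> E w p" and x: "inner x" "x \<noteq> w"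
    and y: "inner y" "y \<noteq> w" "y \<noteq> x" "\<not> E x y"
  shows False
proof -
  have p_nbr: "\<And>v. E p v \<Longrightarrow> v = x" using pendant_unique_neighbour[OF p(1,2)] by blast
  have wx: "E w x" "E w y" using w x y by blast+
  obtain z where z: "E y z" "z \<noteq> w" using inner_other_neighbour[OF n y(1)] .
  have zx: "z \<noteq> x" using z y E_sym by blast
  have yp: "y \<noteq> p" "\<not> E y p" using inner_not_pendant y p p_nbr[of y] E_sym[of y p] by blast+
  have zp: "z \<noteq> p" using p_nbr[of y] z y E_sym[of y p] by blast
  show False
  proof (cases "inner z")
    case True
    have "\<not> E x z"
    proof
      assume "E x z"
      hence "E x y"
        using inner_neighbours_of_universal_inner_adjacent[OF w(2), of x z y] True x y z zx E_sym by blast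
      thus False using y by blast
    qed
    moreover have "E w z" using w True z by blast
    ultimately show False
      using no_isometric_3_2_tadpole[of w y z x p] wx z p x y zx zp yp p_nbr E_sym by blast
  next
    case False
    hence z_pendant: "pendant z" using pendant_or_inner E_less z by blast
    have z_nbr: "\<And>v. E z v \<Longrightarrow> v = y" using pendant_unique_neighbour[OF z_pendant E_sym[OF z(1)]] .
    have "\<not> E w z" "\<not> E x z" "\<not> E p z" using z_nbr[of w] z_nbr[of x] z_nbr[of p] E_sym y(2,3) yp(1) by blast+
    moreover have "\<And>v. E x v \<Longrightarrow> \<not> E v z" using z_nbr y(4) E_sym by blast
    ultimately show False
      using no_induced_P5[of p x w y z] p x wx z y zx zp yp p_nbr E_sym by blast
  qed
qed

lemma inner_vertices_clique:
  assumes n: "2 \<le> n" and no_dom: "\<nexists>v. dominating v" and ex: "inner x0"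
    and "inner x1" "inner y1" "x1 \<noteq> y1"
  shows "E x1 y1"
proof (rule ccontr)
  assume "\<not> E x1 y1"
  obtain w where w: "inner w" "\<And>u. inner u \<Longrightarrow> u \<noteq> w \<Longrightarrow> E w u"
    using inner_vertex_adjacent_to_all_inner[OF n ex] by blast
  obtain p where p: "p < n" "p \<noteq> w" "\<not> E w p" using no_dom w unfolding dominating_def inner_def by blast
  have p_pendant: "pendant p" using p w pendant_or_inner by blast
  then obtain x where px: "E p x" unfolding pendant_def by blast
  have x: "inner x" "x \<noteq> w" using neighbour_of_pendant_inner[OF n no_dom p_pendant px] px p E_sym by blast+
  have "\<exists>y. inner y \<and> y \<noteq> w \<and> y \<noteq> x \<and> \<not> E x y"
  proof (cases "E x x1 \<and> E x y1")
    case True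
    hence "x \<noteq> x1" "x \<noteq> y1" using E_irrefl by blast+
    hence "E x1 y1"
      using inner_neighbours_of_universal_inner_adjacent[OF w(2), of x1 x y1] True assms(4-6) x w E_sym by blast
    thus ?thesis using \<open>\<not> E x1 y1\<close> by blast
  next
    case False
    thus ?thesis using assms(4-6) \<open>\<not> E x1 y1\<close> w E_sym E_irrefl by blast
  qed
  then obtain y where "inner y" "y \<noteq> w" "y \<noteq> x" "\<not> E x y" by blast
  thus False using no_pendant_far_from_universal_inner[OF n w p_pendant px p(2,3) x] by blast
qed

text \<open>Two pendant vertices on the same inner vertex \<open>x\<close> would form an isometric fork with a
  non-neighbour \<open>u\<close> of \<open>x\<close> and the inner vertex that \<open>u\<close> hangs on.\<close>

lemma pendant_neighbour_injective:
  assumes n: "2 \<le> n" and no_dom: "\<nexists>v. dominating v"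
    and clique: "\<And>x y. inner x \<Longrightarrow> inner y \<Longrightarrow> x \<noteq> y \<Longrightarrow> E x y"
    and p: "pendant p" "E p x" and q: "pendant q" "E q x"
  shows "p = q"
proof (rule ccontr)
  assume pq: "p \<noteq> q"
  have x: "inner x" using neighbour_of_pendant_inner[OF n no_dom p] .
  obtain u where u: "u < n" "u \<noteq> x" "\<not> E x u" using no_dom x unfolding dominating_def inner_def by blast
  have u_pendant: "pendant u" using u clique x pendant_or_inner by blast
  then obtain w where uw: "E u w" unfolding pendant_def by blast
  have w: "inner w" using neighbour_of_pendant_inner[OF n no_dom u_pendant uw] .
  have wx: "w \<noteq> x" "E x w" using uw u E_sym clique x w by blast+
  have p_nbr: "\<And>v. E p v \<Longrightarrow> v = x" using pendant_unique_neighbour[OF p] by blast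
  have q_nbr: "\<And>v. E q v \<Longrightarrow> v = x" using pendant_unique_neighbour[OF q] by blast
  have u_nbr: "\<And>v. E u v \<Longrightarrow> v = w" using pendant_unique_neighbour[OF u_pendant uw] by blast
  have ne: "p \<noteq> w" "q \<noteq> w" "p \<noteq> u" "q \<noteq> u" "q \<noteq> x" "p \<noteq> x"
    using w x p q u inner_not_pendant E_sym by blast+
  have "\<not> E p q" "\<not> E p w" "\<not> E q w" "\<not> E p u" "\<not> E q u"
    using p_nbr[of q] p_nbr[of w] q_nbr[of w] p_nbr[of u] q_nbr[of u] ne wx u(2) by blast+
  moreover have "\<And>v. E p v \<Longrightarrow> \<not> E v u" "\<And>v. E q v \<Longrightarrow> \<not> E v u" using p_nbr q_nbr u(3) by blast+
  ultimately show False
    using no_isometric_fork[of x p q w u] p q wx uw u ne pq E_sym by blast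
qed

section \<open>Identification of the graph\<close>

definition pendant_nbr :: "nat \<Rightarrow> nat" where
  "pendant_nbr p = (THE q. E p q)"

lemma E_pendant_nbr: "pendant p \<Longrightarrow> E p (pendant_nbr p)"
  unfolding pendant_nbr_def pendant_def by (metis (mono_tags, lifting) theI)

lemma E_pendant_iff: "pendant p \<Longrightarrow> E p x \<longleftrightarrow> x = pendant_nbr p"
  using E_pendant_nbr pendant_unique_neighbour by blast

lemma inner_exists:
  assumes n: "2 \<le> n" and no_dom: "\<nexists>v. dominating v"
  obtains x where "inner x"
  using neighbour_of_pendant_inner[OF n no_dom _ E_pendant_nbr] pendant_or_inner[of 0] n
  by (cases "pendant 0") auto

lemma two_pendants:
  assumes n: "2 \<le> n" and no_dom: "\<nexists>v. dominating v"
    and clique: "\<And>x y. inner x \<Longrightarrow> inner y \<Longrightarrow> x \<noteq> y \<Longrightarrow> E x y"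
  obtains p q where "pendant p" "pendant q" "p \<noteq> q"
proof -
  have "\<exists>p. pendant p"
  proof (rule ccontr)
    assume "\<nexists>p. pendant p"
    hence "dominating 0" using n clique unfolding dominating_def inner_def by auto
    thus False using no_dom by blast
  qed
  then obtain p where p: "pendant p" by blast
  have "\<exists>q. pendant q \<and> q \<noteq> p"
  proof (rule ccontr)
    assume only_p: "\<nexists>q. pendant q \<and> q \<noteq> p"
    have x: "inner (pendant_nbr p)" using neighbour_of_pendant_inner[OF n no_dom p E_pendant_nbr[OF p]] .
    have "dominating (pendant_nbr p)"
      unfolding dominating_def
    proof (intro conjI allI impI)
      show "pendant_nbr p < n" using x unfolding inner_def by blast
      fix u assume u: "u < n" "u \<noteq> pendant_nbr p"
      show "E (pendant_nbr p) u"
      proof (cases "pendant u")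
        case True
        thus ?thesis using only_p E_sym[OF E_pendant_nbr[OF p]] by blast
      next
        case False
        thus ?thesis using clique x u unfolding inner_def by blast
      qed
    qed
    thus False using no_dom by blast
  qed
  thus ?thesis using that p by blast
qed

lemma pendant_neighbour_not_pendant:
  assumes "2 \<le> n" "\<nexists>v. dominating v" "pendant p" "E p q"
  shows "\<not> pendant q"
  using neighbour_of_pendant_inner[OF assms] inner_not_pendant by blast

text \<open>Without a dominating vertex the graph is \<open>K\<^sub>s\<^sup>t\<close>: list the neighbours of the \<open>t\<close> pendant
  vertices first, then the remaining inner vertices, then the pendant vertices themselves.\<close>

lemma graph_iso_Kst_if_no_dominating:
  assumes n: "2 \<le> n" and no_dom: "\<nexists>v. dominating v"
  shows "\<exists>s t. 2 \<le> t \<and> t \<le> s \<and> s + t = n \<and> graph_iso n E n (Kst s t)"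
proof -
  obtain x0 where "inner x0" using inner_exists[OF n no_dom] .
  note clique = inner_vertices_clique[OF n no_dom this]
  define P where "P = {p. pendant p}"
  have fin_P: "finite P" unfolding P_def by (rule finite_subset[of _ "{0..<n}"]) (auto simp: pendant_def)
  define Ps where "Ps = sorted_list_of_set P"
  define Ns where "Ns = map pendant_nbr Ps"
  define Rest where "Rest = sorted_list_of_set ({x. inner x} - set Ns)"
  define vs where "vs = Ns @ Rest @ Ps"
  define t where "t = length Ps"
  define s where "s = length Ns + length Rest"
  have fin_I: "finite ({x. inner x} - set Ns)" by (rule finite_subset[of _ "{0..<n}"]) (auto simp: inner_def)
  have set_Ps: "set Ps = P" and set_Rest: "set Rest = {x. inner x} - set Ns"
    unfolding Ps_def Rest_def using fin_P fin_I by simp_all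
  have Ns_inner: "set Ns \<subseteq> {x. inner x}"
    unfolding Ns_def using set_Ps neighbour_of_pendant_inner[OF n no_dom _ E_pendant_nbr] unfolding P_def by auto
  have "inj_on pendant_nbr P"
  proof (rule inj_onI)
    fix p q assume "p \<in> P" "q \<in> P" "pendant_nbr p = pendant_nbr q"
    thus "p = q"
      using pendant_neighbour_injective[OF n no_dom clique _ E_pendant_nbr, of p q] E_pendant_nbr[of q]
      unfolding P_def by simp
  qed
  hence "distinct Ns" unfolding Ns_def Ps_def using fin_P by (simp add: distinct_map)
  hence distinct: "distinct vs"
    unfolding vs_def Ps_def Rest_def using set_Ps set_Rest Ns_inner fin_P fin_I inner_not_pendant unfolding P_def
    by auto
  have "set vs = {x. inner x} \<union> P" unfolding vs_def using set_Ps set_Rest Ns_inner by auto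
  also have "\<dots> = {0..<n}" unfolding P_def using pendant_or_inner by (auto simp: inner_def pendant_def)
  finally have "set vs = {0..<n}" .
  hence len: "length vs = n" using distinct_card[OF distinct] by simp
  hence st: "s + t = n" "t \<le> s" unfolding vs_def s_def t_def Ns_def by simp_all
  have set_vs: "set vs = {0..<s + t}" using \<open>set vs = {0..<n}\<close> st by simp
  obtain p q where "pendant p" "pendant q" "p \<noteq> q" using two_pendants[OF n no_dom clique] .
  hence "card {p, q} \<le> card P" using fin_P unfolding P_def by (intro card_mono) auto
  hence t2: "2 \<le> t" using \<open>p \<noteq> q\<close> set_Ps distinct_card[of Ps] unfolding t_def Ps_def by simp
  have low: "inner (vs ! i)" if "i < s" for i
    using that Ns_inner set_Rest nth_mem unfolding vs_def s_def by (auto simp: nth_append)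
  have high: "vs ! i = Ps ! (i - s)" "pendant (vs ! i)" if "s \<le> i" "i < s + t" for i
  proof -
    have "\<not> i < length (Ns @ Rest)" using that by (simp add: s_def)
    hence "((Ns @ Rest) @ Ps) ! i = Ps ! (i - s)" unfolding s_def by (simp only: nth_append if_False) simp
    thus "vs ! i = Ps ! (i - s)" unfolding vs_def by simp
    moreover have "i - s < length Ps" using that unfolding t_def by simp
    ultimately show "pendant (vs ! i)" using set_Ps nth_mem unfolding P_def by fastforce
  qed
  have nbr: "pendant_nbr (vs ! j) = vs ! (j - s)" if "s \<le> j" "j < s + t" for j
  proof -
    have "j - s < length Ns" using that unfolding t_def Ns_def by simp
    hence "vs ! (j - s) = pendant_nbr (Ps ! (j - s))" unfolding vs_def Ns_def by (simp add: nth_append)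
    thus ?thesis using high(1)[OF that] by simp
  qed
  have "graph_iso (s + t) E (s + t) (Kst s t)"
  proof (rule graph_iso_Kst_by_enumeration[OF distinct set_vs st(2) E_sym])
    show "E (vs ! i) (vs ! j) \<longleftrightarrow> i \<noteq> j" if "i < s" "j < s" for i j
    proof -
      have "i < length vs" "j < length vs" using that len st by auto
      thus ?thesis using clique[OF low[OF that(1)] low[OF that(2)]] E_irrefl nth_eq_iff_index_eq[OF distinct] by metis
    qed
    show "E (vs ! i) (vs ! j) \<longleftrightarrow> i = j - s" if "i < s" "s \<le> j" "j < s + t" for i j
    proof -
      have "i < length vs" "j - s < length vs" using that len st by auto
      hence "vs ! i = pendant_nbr (vs ! j) \<longleftrightarrow> i = j - s"
        unfolding nbr[OF that(2,3)] using nth_eq_iff_index_eq[OF distinct] by blast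
      thus ?thesis using E_pendant_iff[OF high(2)[OF that(2,3)]] E_sym by blast
    qed
    show "\<not> E (vs ! i) (vs ! j)" if "s \<le> i" "s \<le> j" "i < s + t" "j < s + t" for i j
      using pendant_neighbour_not_pendant[OF n no_dom] high(2) that by blast
  qed
  thus ?thesis using t2 st by auto
qed

text \<open>With a dominating vertex \<open>v\<close>, the rest of the graph contains no induced \<open>P\<^sub>3\<close> (it would form
  a diamond with \<open>v\<close>), so it is a disjoint union of cliques.\<close>

lemma graph_iso_if_dominating:
  assumes v: "dominating v"
  shows "graph_iso n E n (complete_graph n) \<or>
    (\<exists>ns. length ns \<ge> 2 \<and> (\<forall>m\<in>set ns. 0 < m) \<and> sum_list ns + 1 = n \<and> graph_iso n E n (Kcliques ns))"
proof -
  have vn: "v < n" and vE: "\<And>u. u < n \<Longrightarrow> u \<noteq> v \<Longrightarrow> E v u" using v unfolding dominating_def by auto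
  define R where "R = {0..<n} - {v}"
  have "E x z" if "x \<in> R" "y \<in> R" "z \<in> R" "E x y" "E y z" "x \<noteq> z" for x y z
  proof -
    have "E v x" "E v y" "E v z" using that(1-3) vE unfolding R_def by auto
    thus ?thesis using no_induced_diamond[of v x y z] that by blast
  qed
  then obtain ls where "distinct (concat ls)" "set (concat ls) = {0..<n} - {v}" "\<forall>l\<in>set ls. l \<noteq> []"
    "\<And>i j x y. i < length ls \<Longrightarrow> j < length ls \<Longrightarrow> x \<in> set (ls ! i) \<Longrightarrow> y \<in> set (ls ! j)
      \<Longrightarrow> E x y \<longleftrightarrow> x \<noteq> y \<and> i = j"
    using cluster_graph_blocks[of R E] E_sym E_irrefl unfolding R_def by blast
  thus ?thesis using graph_iso_cone_over_cliques[where E = E, OF E_sym E_irrefl vn vE] by blast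
qed

end

theorem lemma2p6:
  fixes n :: nat and E :: "nat \<Rightarrow> nat \<Rightarrow> bool"
  assumes "simple_graph n E"
    and "graph_connected n E"
    and "lambda2 (distance_matrix n E) \<le> (17 - sqrt 329) / 2"
  shows "graph_iso n E n (complete_graph n)
    \<or> (\<exists>s t. 2 \<le> t \<and> t \<le> s \<and> s + t = n \<and> graph_iso n E n (Kst s t))
    \<or> (\<exists>ns. length ns \<ge> 2 \<and> (\<forall>m\<in>set ns. 0 < m) \<and> sum_list ns + 1 = n
           \<and> graph_iso n E n (Kcliques ns))"
proof -
  interpret small_lambda2_graph n E
    using assms lambda2_bound by unfold_locales linarith+
  show ?thesis
  proof (cases "2 \<le> n")
    case False
    hence single: "x = y" if "x < n" "y < n" for x y using that by linarith
    have "graph_iso n E n (complete_graph n)"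
      by (rule graph_iso_complete_graph) (use single E_irrefl in blast)
    thus ?thesis by blast
  next
    case True
    thus ?thesis using graph_iso_if_dominating graph_iso_Kst_if_no_dominating by blast
  qed
qed

end
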